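(* Let $(A,\sigma)$ be a lax central bialgebra of a monoidal category $\mathcal C$ and $A\otimes_\sigma ?$ the associated bimonad on $\mathcal C$. Then: (a) $A\otimes_\sigma ?$ is a left Hopf monad $\iff$ it is a left pre-Hopf monad $\iff$ $A$ admits an antipode; (b) $A\otimes_\sigma ?$ is a right Hopf monad $\iff$ it is a right pre-Hopf monad $\iff$ $\sigma$ is invertible and $A$ admits an opantipode. In particular $A\otimes_\sigma ?$ is a Hopf monad iff it is a pre-Hopf monad iff $(A,\sigma)$ is a Hopf algebra in the center $\mathcal Z(\mathcal C)$.
   Context: Monoidal categories are strict. A lax half-braiding for an object $M$ of $\mathcal C$ is a natural transformation $\sigma_X\colon M\otimes X\to X\otimes M$ with $\sigma_{Y\otimes Z}=(Y\otimes\sigma_Z)(\sigma_Y\otimes Z)$ and $\sigma_{\mathbb 1}=\mathrm{id}_M$. The lax center $\mathcal Z_{lax}(\mathcal C)$ has objects such pairs $(M,\sigma)$, morphisms $f\colon M\to M'$ with $(X\otimes f)\sigma_X=\sigma'_X(f\otimes X)$, product $(M,\sigma)\otimes(N,\gamma)=(M\otimes N,(\sigma\otimes N)(M\otimes\gamma))$, and lax braiding $\tau_{(M,\sigma),(N,\gamma)}=\sigma_N$; the center $\mathcal Z(\mathcal C)$ is the full subcategory where $\sigma$ is invertible (a braided category). A bialgebra in a lax braided category with lax braiding $\tau$ is an object $A$ with algebra $(m,u)$ and coalgebra $(\Delta,\varepsilon)$ structures such that $\Delta m=(m\otimes m)(A\otimes\tau_{A,A}\otimes A)(\Delta\otimes\Delta)$,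 $\Delta u=u\otimes u$, $\varepsilon m=\varepsilon\otimes\varepsilon$, $\varepsilon u=\mathrm{id}_{\mathbb 1}$. An antipode is $S\colon A\to A$ with $m(S\otimes A)\Delta=u\varepsilon=m(A\otimes S)\Delta$; if $\tau_{A,A}$ is invertible, an opantipode is $S'$ with $m\tau_{A,A}^{-1}(S'\otimes A)\Delta=u\varepsilon=m\tau_{A,A}^{-1}(A\otimes S')\Delta$. A Hopf algebra is a bialgebra with invertible antipode and $\tau_{A,A}$ invertible. A lax central bialgebra of $\mathcal C$ is a bialgebra in $\mathcal Z_{lax}(\mathcal C)$; a central Hopf algebra is a Hopf algebra in $\mathcal Z(\mathcal C)$. For a lax central bialgebra $(A,\sigma)$, the bimonad $A\otimes_\sigma ?$ is the functor $X\mapsto A\otimes X$ with $\mu_X=m\otimes X$, $\eta_X=u\otimes X$, $T_2(X,Y)=((A\otimes\sigma_X)(\Delta\otimes X))\otimes Y$, $T_0=\varepsilon$. Bimonad: monad with comonoidal structure $(T_2,T_0)$ making $\mu,\eta$ comonoidal; fusion operators $H^l_{X,Y}=(TX\otimes\mu_Y)T_2(X,TY)$, $H^r_{X,Y}=(\mu_X\otimes TY)T_2(TX,Y)$; left (resp. right) Hopf if $H^l$ (resp. $H^r$) invertible; left (resp. right) pre-Hopf if $H^l_{\mathbb 1,X}$ (resp. $H^r_{X,\mathbb 1}$) invertible for all $X$. *)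

theory Defs
  imports Main
begin

record ('o, 'm) smc =
  Obj  :: "'o set"
  Hom  :: "'o \<Rightarrow> 'o \<Rightarrow> 'm set"
  cmp  :: "'m \<Rightarrow> 'm \<Rightarrow> 'm"      \<comment> \<open>cmp g f = g o f (first f, then g)\<close>
  idm  :: "'o \<Rightarrow> 'm"
  tobj :: "'o \<Rightarrow> 'o \<Rightarrow> 'o"
  tarr :: "'m \<Rightarrow> 'm \<Rightarrow> 'm"
  uobj :: "'o"

definition strict_monoidal_cat :: "('o, 'm, 'x) smc_scheme \<Rightarrow> bool" where
  "strict_monoidal_cat C \<longleftrightarrow>
     (\<forall>a\<in>Obj C. idm C a \<in> Hom C a a)
   \<and> (\<forall>a\<in>Obj C. \<forall>b\<in>Obj C. \<forall>c\<in>Obj C. \<forall>f g.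
        f \<in> Hom C a b \<and> g \<in> Hom C b c \<longrightarrow> cmp C g f \<in> Hom C a c)
   \<and> (\<forall>a\<in>Obj C. \<forall>b\<in>Obj C. \<forall>f. f \<in> Hom C a b \<longrightarrow>
        cmp C f (idm C a) = f \<and> cmp C (idm C b) f = f)
   \<and> (\<forall>a\<in>Obj C. \<forall>b\<in>Obj C. \<forall>c\<in>Obj C. \<forall>d\<in>Obj C. \<forall>f g h.
        f \<in> Hom C a b \<and> g \<in> Hom C b c \<and> h \<in> Hom C c d \<longrightarrow>
        cmp C h (cmp C g f) = cmp C (cmp C h g) f)
   \<and> uobj C \<in> Obj C
   \<and> (\<forall>a\<in>Obj C. \<forall>b\<in>Obj C. tobj C a b \<in> Obj C)
   \<and> (\<forall>a\<in>Obj C. \<forall>b\<in>Obj C. \<forall>c\<in>Obj C. \<forall>d\<in>Obj C. \<forall>f g.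
        f \<in> Hom C a b \<and> g \<in> Hom C c d \<longrightarrow> tarr C f g \<in> Hom C (tobj C a c) (tobj C b d))
   \<and> (\<forall>a\<in>Obj C. \<forall>b\<in>Obj C. tarr C (idm C a) (idm C b) = idm C (tobj C a b))
   \<and> (\<forall>a\<in>Obj C. \<forall>b\<in>Obj C. \<forall>c\<in>Obj C. \<forall>d\<in>Obj C. \<forall>e\<in>Obj C. \<forall>k\<in>Obj C. \<forall>f f' g g'.
        f \<in> Hom C a b \<and> f' \<in> Hom C b c \<and> g \<in> Hom C d e \<and> g' \<in> Hom C e k \<longrightarrow>
        tarr C (cmp C f' f) (cmp C g' g) = cmp C (tarr C f' g') (tarr C f g))
   \<and> (\<forall>a\<in>Obj C. \<forall>b\<in>Obj C. \<forall>c\<in>Obj C. tobj C a (tobj C b c) = tobj C (tobj C a b) c)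
   \<and> (\<forall>a\<in>Obj C. tobj C (uobj C) a = a \<and> tobj C a (uobj C) = a)
   \<and> (\<forall>a\<in>Obj C. \<forall>b\<in>Obj C. \<forall>c\<in>Obj C. \<forall>d\<in>Obj C. \<forall>e\<in>Obj C. \<forall>k\<in>Obj C. \<forall>f g h.
        f \<in> Hom C a b \<and> g \<in> Hom C c d \<and> h \<in> Hom C e k \<longrightarrow>
        tarr C f (tarr C g h) = tarr C (tarr C f g) h)
   \<and> (\<forall>a\<in>Obj C. \<forall>b\<in>Obj C. \<forall>f. f \<in> Hom C a b \<longrightarrow>
        tarr C (idm C (uobj C)) f = f \<and> tarr C f (idm C (uobj C)) = f)"

definition iso :: "('o, 'm, 'x) smc_scheme \<Rightarrow> 'm \<Rightarrow> 'o \<Rightarrow> 'o \<Rightarrow> bool" where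
  "iso C f a b \<longleftrightarrow> f \<in> Hom C a b \<and>
     (\<exists>g\<in>Hom C b a. cmp C g f = idm C a \<and> cmp C f g = idm C b)"

definition inverse_of :: "('o, 'm, 'x) smc_scheme \<Rightarrow> 'm \<Rightarrow> 'm \<Rightarrow> 'o \<Rightarrow> 'o \<Rightarrow> bool" where
  "inverse_of C f g a b \<longleftrightarrow> f \<in> Hom C a b \<and> g \<in> Hom C b a \<and>
     cmp C g f = idm C a \<and> cmp C f g = idm C b"

definition lax_half_braiding :: "('o, 'm, 'x) smc_scheme \<Rightarrow> 'o \<Rightarrow> ('o \<Rightarrow> 'm) \<Rightarrow> bool" where
  "lax_half_braiding C M s \<longleftrightarrow> M \<in> Obj C
   \<and> (\<forall>X\<in>Obj C. s X \<in> Hom C (tobj C M X) (tobj C X M))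
   \<and> (\<forall>X\<in>Obj C. \<forall>Y\<in>Obj C. \<forall>f. f \<in> Hom C X Y \<longrightarrow>
        cmp C (tarr C f (idm C M)) (s X) = cmp C (s Y) (tarr C (idm C M) f))
   \<and> (\<forall>Y\<in>Obj C. \<forall>Z\<in>Obj C.
        s (tobj C Y Z) = cmp C (tarr C (idm C Y) (s Z)) (tarr C (s Y) (idm C Z)))
   \<and> s (uobj C) = idm C M"

text \<open>Half-braiding of the tensor product (M,s) (x) (N,g) in the lax center.\<close>
definition zt_hb :: "('o, 'm, 'x) smc_scheme \<Rightarrow> 'o \<Rightarrow> ('o \<Rightarrow> 'm) \<Rightarrow> 'o \<Rightarrow> ('o \<Rightarrow> 'm) \<Rightarrow> 'o \<Rightarrow> 'm" where
  "zt_hb C M s N g X = cmp C (tarr C (s X) (idm C N)) (tarr C (idm C M) (g X))"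

text \<open>Half-braiding of the unit object of the lax center.\<close>
definition zu_hb :: "('o, 'm, 'x) smc_scheme \<Rightarrow> 'o \<Rightarrow> 'm" where
  "zu_hb C X = idm C X"

definition zlax_hom :: "('o, 'm, 'x) smc_scheme \<Rightarrow> 'o \<Rightarrow> ('o \<Rightarrow> 'm) \<Rightarrow> 'o \<Rightarrow> ('o \<Rightarrow> 'm) \<Rightarrow> 'm \<Rightarrow> bool" where
  "zlax_hom C M s N g f \<longleftrightarrow> f \<in> Hom C M N \<and>
     (\<forall>X\<in>Obj C. cmp C (tarr C (idm C X) f) (s X) = cmp C (g X) (tarr C f (idm C X)))"

text \<open>A bialgebra in the lax center; the lax braiding tau_{A,A} is s A.\<close>
definition lax_central_bialgebra :: "('o, 'm, 'x) smc_scheme \<Rightarrow> 'o \<Rightarrow> ('o \<Rightarrow> 'm)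
    \<Rightarrow> 'm \<Rightarrow> 'm \<Rightarrow> 'm \<Rightarrow> 'm \<Rightarrow> bool" where
  "lax_central_bialgebra C A s mu un cm cu \<longleftrightarrow>
     lax_half_braiding C A s
   \<and> zlax_hom C (tobj C A A) (zt_hb C A s A s) A s mu
   \<and> zlax_hom C (uobj C) (zu_hb C) A s un
   \<and> zlax_hom C A s (tobj C A A) (zt_hb C A s A s) cm
   \<and> zlax_hom C A s (uobj C) (zu_hb C) cu
   \<and> cmp C mu (tarr C mu (idm C A)) = cmp C mu (tarr C (idm C A) mu)
   \<and> cmp C mu (tarr C un (idm C A)) = idm C A
   \<and> cmp C mu (tarr C (idm C A) un) = idm C A
   \<and> cmp C (tarr C cm (idm C A)) cm = cmp C (tarr C (idm C A) cm) cm
   \<and> cmp C (tarr C cu (idm C A)) cm = idm C A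
   \<and> cmp C (tarr C (idm C A) cu) cm = idm C A
   \<and> cmp C cm mu = cmp C (tarr C mu mu)
        (cmp C (tarr C (tarr C (idm C A) (s A)) (idm C A)) (tarr C cm cm))
   \<and> cmp C cm un = tarr C un un
   \<and> cmp C cu mu = tarr C cu cu
   \<and> cmp C cu un = idm C (uobj C)"

definition is_antipode :: "('o, 'm, 'x) smc_scheme \<Rightarrow> 'o \<Rightarrow> ('o \<Rightarrow> 'm)
    \<Rightarrow> 'm \<Rightarrow> 'm \<Rightarrow> 'm \<Rightarrow> 'm \<Rightarrow> 'm \<Rightarrow> bool" where
  "is_antipode C A s mu un cm cu S \<longleftrightarrow> zlax_hom C A s A s S
   \<and> cmp C mu (cmp C (tarr C S (idm C A)) cm) = cmp C un cu
   \<and> cmp C mu (cmp C (tarr C (idm C A) S) cm) = cmp C un cu"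

definition has_antipode :: "('o, 'm, 'x) smc_scheme \<Rightarrow> 'o \<Rightarrow> ('o \<Rightarrow> 'm)
    \<Rightarrow> 'm \<Rightarrow> 'm \<Rightarrow> 'm \<Rightarrow> 'm \<Rightarrow> bool" where
  "has_antipode C A s mu un cm cu \<longleftrightarrow> (\<exists>S. is_antipode C A s mu un cm cu S)"

text \<open>Opantipode: requires tau_{A,A} = s A invertible; ti is its inverse.\<close>
definition is_opantipode :: "('o, 'm, 'x) smc_scheme \<Rightarrow> 'o \<Rightarrow> ('o \<Rightarrow> 'm)
    \<Rightarrow> 'm \<Rightarrow> 'm \<Rightarrow> 'm \<Rightarrow> 'm \<Rightarrow> 'm \<Rightarrow> bool" where
  "is_opantipode C A s mu un cm cu S' \<longleftrightarrow> zlax_hom C A s A s S'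
   \<and> (\<exists>ti. inverse_of C (s A) ti (tobj C A A) (tobj C A A)
        \<and> cmp C mu (cmp C ti (cmp C (tarr C S' (idm C A)) cm)) = cmp C un cu
        \<and> cmp C mu (cmp C ti (cmp C (tarr C (idm C A) S') cm)) = cmp C un cu)"

definition has_opantipode :: "('o, 'm, 'x) smc_scheme \<Rightarrow> 'o \<Rightarrow> ('o \<Rightarrow> 'm)
    \<Rightarrow> 'm \<Rightarrow> 'm \<Rightarrow> 'm \<Rightarrow> 'm \<Rightarrow> bool" where
  "has_opantipode C A s mu un cm cu \<longleftrightarrow> (\<exists>S'. is_opantipode C A s mu un cm cu S')"

definition invertible_hb :: "('o, 'm, 'x) smc_scheme \<Rightarrow> 'o \<Rightarrow> ('o \<Rightarrow> 'm) \<Rightarrow> bool" where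
  "invertible_hb C M s \<longleftrightarrow> (\<forall>X\<in>Obj C. iso C (s X) (tobj C M X) (tobj C X M))"

text \<open>Central Hopf algebra: Hopf algebra in the center Z(C), a full subcategory
  of the lax center closed under the monoidal structure.\<close>
definition central_hopf_algebra :: "('o, 'm, 'x) smc_scheme \<Rightarrow> 'o \<Rightarrow> ('o \<Rightarrow> 'm)
    \<Rightarrow> 'm \<Rightarrow> 'm \<Rightarrow> 'm \<Rightarrow> 'm \<Rightarrow> bool" where
  "central_hopf_algebra C A s mu un cm cu \<longleftrightarrow>
     lax_central_bialgebra C A s mu un cm cu
   \<and> invertible_hb C A s
   \<and> (\<exists>S. is_antipode C A s mu un cm cu S \<and> iso C S A A)
   \<and> iso C (s A) (tobj C A A) (tobj C A A)"

text \<open>Bimonad data: T on objects, multiplication mu_X, comonoidal T2(X,Y).\<close>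
definition fusion_l :: "('o, 'm, 'x) smc_scheme \<Rightarrow> ('o \<Rightarrow> 'o) \<Rightarrow> ('o \<Rightarrow> 'm)
    \<Rightarrow> ('o \<Rightarrow> 'o \<Rightarrow> 'm) \<Rightarrow> 'o \<Rightarrow> 'o \<Rightarrow> 'm" where
  "fusion_l C T mT T2 X Y = cmp C (tarr C (idm C (T X)) (mT Y)) (T2 X (T Y))"

definition fusion_r :: "('o, 'm, 'x) smc_scheme \<Rightarrow> ('o \<Rightarrow> 'o) \<Rightarrow> ('o \<Rightarrow> 'm)
    \<Rightarrow> ('o \<Rightarrow> 'o \<Rightarrow> 'm) \<Rightarrow> 'o \<Rightarrow> 'o \<Rightarrow> 'm" where
  "fusion_r C T mT T2 X Y = cmp C (tarr C (mT X) (idm C (T Y))) (T2 (T X) Y)"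

definition left_hopf :: "('o, 'm, 'x) smc_scheme \<Rightarrow> ('o \<Rightarrow> 'o) \<Rightarrow> ('o \<Rightarrow> 'm)
    \<Rightarrow> ('o \<Rightarrow> 'o \<Rightarrow> 'm) \<Rightarrow> bool" where
  "left_hopf C T mT T2 \<longleftrightarrow> (\<forall>X\<in>Obj C. \<forall>Y\<in>Obj C.
     iso C (fusion_l C T mT T2 X Y) (T (tobj C X (T Y))) (tobj C (T X) (T Y)))"

definition right_hopf :: "('o, 'm, 'x) smc_scheme \<Rightarrow> ('o \<Rightarrow> 'o) \<Rightarrow> ('o \<Rightarrow> 'm)
    \<Rightarrow> ('o \<Rightarrow> 'o \<Rightarrow> 'm) \<Rightarrow> bool" where
  "right_hopf C T mT T2 \<longleftrightarrow> (\<forall>X\<in>Obj C. \<forall>Y\<in>Obj C.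
     iso C (fusion_r C T mT T2 X Y) (T (tobj C (T X) Y)) (tobj C (T X) (T Y)))"

definition left_prehopf :: "('o, 'm, 'x) smc_scheme \<Rightarrow> ('o \<Rightarrow> 'o) \<Rightarrow> ('o \<Rightarrow> 'm)
    \<Rightarrow> ('o \<Rightarrow> 'o \<Rightarrow> 'm) \<Rightarrow> bool" where
  "left_prehopf C T mT T2 \<longleftrightarrow> (\<forall>X\<in>Obj C.
     iso C (fusion_l C T mT T2 (uobj C) X) (T (tobj C (uobj C) (T X))) (tobj C (T (uobj C)) (T X)))"

definition right_prehopf :: "('o, 'm, 'x) smc_scheme \<Rightarrow> ('o \<Rightarrow> 'o) \<Rightarrow> ('o \<Rightarrow> 'm)
    \<Rightarrow> ('o \<Rightarrow> 'o \<Rightarrow> 'm) \<Rightarrow> bool" where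
  "right_prehopf C T mT T2 \<longleftrightarrow> (\<forall>X\<in>Obj C.
     iso C (fusion_r C T mT T2 X (uobj C)) (T (tobj C (T X) (uobj C))) (tobj C (T X) (T (uobj C))))"

definition hopf_monad :: "('o, 'm, 'x) smc_scheme \<Rightarrow> ('o \<Rightarrow> 'o) \<Rightarrow> ('o \<Rightarrow> 'm)
    \<Rightarrow> ('o \<Rightarrow> 'o \<Rightarrow> 'm) \<Rightarrow> bool" where
  "hopf_monad C T mT T2 \<longleftrightarrow> left_hopf C T mT T2 \<and> right_hopf C T mT T2"

definition prehopf_monad :: "('o, 'm, 'x) smc_scheme \<Rightarrow> ('o \<Rightarrow> 'o) \<Rightarrow> ('o \<Rightarrow> 'm)
    \<Rightarrow> ('o \<Rightarrow> 'o \<Rightarrow> 'm) \<Rightarrow> bool" where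
  "prehopf_monad C T mT T2 \<longleftrightarrow> left_prehopf C T mT T2 \<and> right_prehopf C T mT T2"

definition bm_T :: "('o, 'm, 'x) smc_scheme \<Rightarrow> 'o \<Rightarrow> 'o \<Rightarrow> 'o" where
  "bm_T C A X = tobj C A X"

definition bm_mu :: "('o, 'm, 'x) smc_scheme \<Rightarrow> 'm \<Rightarrow> 'o \<Rightarrow> 'm" where
  "bm_mu C mu X = tarr C mu (idm C X)"

definition bm_eta :: "('o, 'm, 'x) smc_scheme \<Rightarrow> 'm \<Rightarrow> 'o \<Rightarrow> 'm" where
  "bm_eta C un X = tarr C un (idm C X)"

definition bm_T2 :: "('o, 'm, 'x) smc_scheme \<Rightarrow> 'o \<Rightarrow> ('o \<Rightarrow> 'm) \<Rightarrow> 'm \<Rightarrow> 'o \<Rightarrow> 'o \<Rightarrow> 'm" where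
  "bm_T2 C A s cm X Y =
     tarr C (cmp C (tarr C (idm C A) (s X)) (tarr C cm (idm C X))) (idm C Y)"

definition bm_T0 :: "'m \<Rightarrow> 'm" where
  "bm_T0 cu = cu"

end

theory Submission
  imports Defs
begin

text \<open>
  The fusion operators of A \<otimes>_s ? are built from the structure maps of A, so each
  statement of the theorem is a statement about morphisms of C.  The left fusion operator
  is H^l_(X,Y) = fus id X \<otimes> Y with fus \<phi> X = (A \<otimes> X \<otimes> m)(A \<otimes> s X \<otimes> A)(A \<otimes> \<phi> \<otimes> X \<otimes> A)(d \<otimes> X \<otimes> A).
  The map \<phi> \<mapsto> fus \<phi> X turns convolution into composition, so an antipode (a convolution
  inverse of id) makes all fus id X invertible; conversely an inverse of H1 = fus id I is
  itself of the form fus S I, and S is an antipode.  For (b) the right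
  fusion operator at the unit factors as s A composed with the left fusion operator H1 of
  the co-opposite structure (A, m, u, (s A)^-1 d, e), whose antipodes are exactly the
  opantipodes of A; invertibility of all right fusion operators forces s to be invertible.
  Finally an antipode and an opantipode are mutually inverse, which gives the statement
  about Hopf algebras in the center.

  To reason diagrammatically we work with typed arrows, for which composition is total,
  and prove equations between composites of whiskered arrows by rewriting right-nested
  composites with the axioms in "context form".
\<close>

text \<open>A morphism of C is packaged with its source and target; the value
  None stands for an undefined (ill-typed) composite.  Composition of typed arrows is
  then a total and unconditionally associative operation, so that equations between
  long composites can be normalised by the simplifier.\<close>
type_synonym ('o,'m) ar = "('o \<times> 'm \<times> 'o) option"

definition src :: "('o,'m) ar \<Rightarrow> 'o" where "src f = fst (the f)"
definition tgt :: "('o,'m) ar \<Rightarrow> 'o" where "tgt f = snd (snd (the f))"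
definition mor :: "('o,'m) ar \<Rightarrow> 'm" where "mor f = fst (snd (the f))"

lemma src_Some[simp]: "src (Some (a,f,b)) = a" and tgt_Some[simp]: "tgt (Some (a,f,b)) = b" and mor_Some[simp]: "mor (Some (a,f,b)) = f"
  by (simp_all add: src_def tgt_def mor_def)

locale smc_calc =
  fixes C :: "('o,'m) smc"
  assumes SMC: "strict_monoidal_cat C"
begin

abbreviation "Ob \<equiv> Obj C"
abbreviation "I \<equiv> uobj C"
abbreviation tob (infixr "\<otimes>" 80) where "a \<otimes> b \<equiv> tobj C a b"

lemma id_hom: "a \<in> Ob \<Longrightarrow> idm C a \<in> Hom C a a" using SMC by (simp add: strict_monoidal_cat_def)
lemma cmp_hom: "a \<in> Ob \<Longrightarrow> b \<in> Ob \<Longrightarrow> c \<in> Ob \<Longrightarrow> f \<in> Hom C a b \<Longrightarrow> g \<in> Hom C b c \<Longrightarrow> cmp C g f \<in> Hom C a c"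
  using SMC by (simp add: strict_monoidal_cat_def)
lemma cmp_idr: "a \<in> Ob \<Longrightarrow> b \<in> Ob \<Longrightarrow> f \<in> Hom C a b \<Longrightarrow> cmp C f (idm C a) = f"
  using SMC by (simp add: strict_monoidal_cat_def)
lemma cmp_idl: "a \<in> Ob \<Longrightarrow> b \<in> Ob \<Longrightarrow> f \<in> Hom C a b \<Longrightarrow> cmp C (idm C b) f = f"
  using SMC by (simp add: strict_monoidal_cat_def)
lemma cmp_assoc: "a \<in> Ob \<Longrightarrow> b \<in> Ob \<Longrightarrow> c \<in> Ob \<Longrightarrow> d \<in> Ob \<Longrightarrow> f \<in> Hom C a b \<Longrightarrow> g \<in> Hom C b c \<Longrightarrow> h \<in> Hom C c d
   \<Longrightarrow> cmp C h (cmp C g f) = cmp C (cmp C h g) f"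
  using SMC by (simp add: strict_monoidal_cat_def)
lemma unit_ob[simp]: "I \<in> Ob" using SMC by (simp add: strict_monoidal_cat_def)
lemma tob_ob[simp]: "a \<in> Ob \<Longrightarrow> b \<in> Ob \<Longrightarrow> a \<otimes> b \<in> Ob" using SMC by (simp add: strict_monoidal_cat_def)
lemma tarr_hom: "a \<in> Ob \<Longrightarrow> b \<in> Ob \<Longrightarrow> c \<in> Ob \<Longrightarrow> d \<in> Ob \<Longrightarrow> f \<in> Hom C a b \<Longrightarrow> g \<in> Hom C c d
   \<Longrightarrow> tarr C f g \<in> Hom C (a \<otimes> c) (b \<otimes> d)"
  using SMC by (simp add: strict_monoidal_cat_def)
lemma tarr_id: "a \<in> Ob \<Longrightarrow> b \<in> Ob \<Longrightarrow> tarr C (idm C a) (idm C b) = idm C (a \<otimes> b)"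
  using SMC by (simp add: strict_monoidal_cat_def)
lemma interch: "a \<in> Ob \<Longrightarrow> b \<in> Ob \<Longrightarrow> c \<in> Ob \<Longrightarrow> d \<in> Ob \<Longrightarrow> e \<in> Ob \<Longrightarrow> k \<in> Ob \<Longrightarrow>
   f \<in> Hom C a b \<Longrightarrow> f' \<in> Hom C b c \<Longrightarrow> g \<in> Hom C d e \<Longrightarrow> g' \<in> Hom C e k \<Longrightarrow>
   tarr C (cmp C f' f) (cmp C g' g) = cmp C (tarr C f' g') (tarr C f g)"
  using SMC by (simp add: strict_monoidal_cat_def)
lemma tob_assoc[simp]: "a \<in> Ob \<Longrightarrow> b \<in> Ob \<Longrightarrow> c \<in> Ob \<Longrightarrow> (a \<otimes> b) \<otimes> c = a \<otimes> (b \<otimes> c)"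
  using SMC unfolding strict_monoidal_cat_def by metis
lemma tob_unitL[simp]: "a \<in> Ob \<Longrightarrow> I \<otimes> a = a" using SMC by (simp add: strict_monoidal_cat_def)
lemma tob_unitR[simp]: "a \<in> Ob \<Longrightarrow> a \<otimes> I = a" using SMC by (simp add: strict_monoidal_cat_def)
lemma tarr_assoc: "a \<in> Ob \<Longrightarrow> b \<in> Ob \<Longrightarrow> c \<in> Ob \<Longrightarrow> d \<in> Ob \<Longrightarrow> e \<in> Ob \<Longrightarrow> k \<in> Ob \<Longrightarrow>
   f \<in> Hom C a b \<Longrightarrow> g \<in> Hom C c d \<Longrightarrow> h \<in> Hom C e k \<Longrightarrow>
   tarr C f (tarr C g h) = tarr C (tarr C f g) h"
  using SMC by (simp add: strict_monoidal_cat_def)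
lemma tarr_unitL: "a \<in> Ob \<Longrightarrow> b \<in> Ob \<Longrightarrow> f \<in> Hom C a b \<Longrightarrow> tarr C (idm C I) f = f"
  using SMC by (simp add: strict_monoidal_cat_def)
lemma tarr_unitR: "a \<in> Ob \<Longrightarrow> b \<in> Ob \<Longrightarrow> f \<in> Hom C a b \<Longrightarrow> tarr C f (idm C I) = f"
  using SMC by (simp add: strict_monoidal_cat_def)

text \<open>arr f: f is a well-typed arrow; ok f: f is well-typed or undefined.  mk packages a
  morphism, the composition g \<bullet> f (first f) is defined iff the types match, ID is the identity,
  W L f R is the whiskering id_L \<otimes> f \<otimes> id_R, and tn the tensor product of arrows.\<close>
definition arr :: "('o,'m) ar \<Rightarrow> bool" where
  "arr f \<longleftrightarrow> f \<noteq> None \<and> src f \<in> Ob \<and> tgt f \<in> Ob \<and> mor f \<in> Hom C (src f) (tgt f)"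
definition ok :: "('o,'m) ar \<Rightarrow> bool" where "ok f \<longleftrightarrow> f = None \<or> arr f"

definition mk :: "'o \<Rightarrow> 'm \<Rightarrow> 'o \<Rightarrow> ('o,'m) ar" where
  "mk a g b = (if a \<in> Ob \<and> b \<in> Ob \<and> g \<in> Hom C a b then Some (a,g,b) else None)"
definition cp :: "('o,'m) ar \<Rightarrow> ('o,'m) ar \<Rightarrow> ('o,'m) ar" (infixr "\<bullet>" 55) where
  "g \<bullet> f = (if arr f \<and> arr g \<and> src g = tgt f then Some (src f, cmp C (mor g) (mor f), tgt g) else None)"
definition ID :: "'o \<Rightarrow> ('o,'m) ar" where "ID a = mk a (idm C a) a"
definition W :: "'o \<Rightarrow> ('o,'m) ar \<Rightarrow> 'o \<Rightarrow> ('o,'m) ar" where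
  "W L f R = (if L \<in> Ob \<and> R \<in> Ob \<and> arr f then
     Some (L \<otimes> (src f \<otimes> R), tarr C (idm C L) (tarr C (mor f) (idm C R)), L \<otimes> (tgt f \<otimes> R)) else None)"
definition tn :: "('o,'m) ar \<Rightarrow> ('o,'m) ar \<Rightarrow> ('o,'m) ar" where
  "tn f g = (if arr f \<and> arr g then Some (src f \<otimes> src g, tarr C (mor f) (mor g), tgt f \<otimes> tgt g) else None)"

lemma arr_Some: "arr (Some (a,g,b)) \<longleftrightarrow> a \<in> Ob \<and> b \<in> Ob \<and> g \<in> Hom C a b" by (simp add: arr_def)
lemma arr_mk[simp]: "arr (mk a g b) \<longleftrightarrow> a \<in> Ob \<and> b \<in> Ob \<and> g \<in> Hom C a b" by (simp add: mk_def arr_def)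
lemma mk_src[simp]: "arr (mk a g b) \<Longrightarrow> src (mk a g b) = a" and mk_tgt[simp]: "arr (mk a g b) \<Longrightarrow> tgt (mk a g b) = b"
  and mk_mor: "arr (mk a g b) \<Longrightarrow> mor (mk a g b) = g" by (auto simp: mk_def arr_def split: if_splits)
lemma ok_mk[simp]: "ok (mk a g b)" by (simp add: ok_def mk_def arr_def)
lemma arr_ok[simp]: "arr f \<Longrightarrow> ok f" by (simp add: ok_def)
lemma arrD: "arr f \<Longrightarrow> src f \<in> Ob" "arr f \<Longrightarrow> tgt f \<in> Ob" "arr f \<Longrightarrow> mor f \<in> Hom C (src f) (tgt f)"
  by (simp_all add: arr_def)
lemma arr_None[simp]: "\<not> arr None" by (simp add: arr_def)
declare arrD[simp]
lemma arr_Some_ex: "arr f \<Longrightarrow> f = Some (src f, mor f, tgt f)"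
  by (cases f) (auto simp: arr_def src_def tgt_def mor_def simp del: arrD)

lemma arr_cp_iff[simp]: "arr (g \<bullet> f) \<longleftrightarrow> arr f \<and> arr g \<and> src g = tgt f"
  unfolding cp_def by (auto simp: arr_def simp del: arrD intro: cmp_hom)
lemma src_cp[simp]: "arr (g \<bullet> f) \<Longrightarrow> src (g \<bullet> f) = src f" and tgt_cp[simp]: "arr (g \<bullet> f) \<Longrightarrow> tgt (g \<bullet> f) = tgt g"
  and mor_cp: "arr (g \<bullet> f) \<Longrightarrow> mor (g \<bullet> f) = cmp C (mor g) (mor f)"
  by (auto simp: cp_def split: if_splits)
lemma ok_cp[simp]: "ok (g \<bullet> f)" by (auto simp: ok_def cp_def arr_def simp del: arrD intro: cmp_hom)
lemma cp_None[simp]: "g \<bullet> None = None" "None \<bullet> f = None" by (auto simp: cp_def)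

lemma arr_ID[simp]: "arr (ID a) \<longleftrightarrow> a \<in> Ob" by (auto simp: ID_def intro: id_hom)
lemma src_ID[simp]: "a \<in> Ob \<Longrightarrow> src (ID a) = a" and tgt_ID[simp]: "a \<in> Ob \<Longrightarrow> tgt (ID a) = a"
  and mor_ID: "a \<in> Ob \<Longrightarrow> mor (ID a) = idm C a" by (auto simp: ID_def mk_def intro: id_hom)
lemma ok_ID[simp]: "ok (ID a)" by (simp add: ID_def)

lemma arr_W_iff[simp]: "arr (W L f R) \<longleftrightarrow> L \<in> Ob \<and> R \<in> Ob \<and> arr f"
proof -
  have "arr f \<Longrightarrow> L \<in> Ob \<Longrightarrow> R \<in> Ob \<Longrightarrow> tarr C (idm C L) (tarr C (mor f) (idm C R)) \<in> Hom C (L \<otimes> (src f \<otimes> R)) (L \<otimes> (tgt f \<otimes> R))"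
    by (intro tarr_hom[of L L "src f \<otimes> R" "tgt f \<otimes> R"] tarr_hom[of "src f" "tgt f" R R] id_hom) (auto simp: arrD)
  thus ?thesis unfolding W_def by (auto simp: arr_Some)
qed
lemma src_W[simp]: "arr (W L f R) \<Longrightarrow> src (W L f R) = L \<otimes> (src f \<otimes> R)"
  and tgt_W[simp]: "arr (W L f R) \<Longrightarrow> tgt (W L f R) = L \<otimes> (tgt f \<otimes> R)"
  and mor_W: "arr (W L f R) \<Longrightarrow> mor (W L f R) = tarr C (idm C L) (tarr C (mor f) (idm C R))"
  by (auto simp: W_def split: if_splits)
lemma ok_W[simp]: "ok (W L f R)" unfolding ok_def using arr_W_iff[of L f R] by (auto simp: W_def)
lemma W_None[simp]: "W L None R = None" by (simp add: W_def)

lemma arr_tn_iff[simp]: "arr (tn f g) \<longleftrightarrow> arr f \<and> arr g"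
proof -
  have "arr f \<Longrightarrow> arr g \<Longrightarrow> tarr C (mor f) (mor g) \<in> Hom C (src f \<otimes> src g) (tgt f \<otimes> tgt g)"
    by (intro tarr_hom) (auto simp: arrD)
  thus ?thesis unfolding tn_def by (auto simp: arr_Some)
qed
lemma src_tn[simp]: "arr (tn f g) \<Longrightarrow> src (tn f g) = src f \<otimes> src g" and tgt_tn[simp]: "arr (tn f g) \<Longrightarrow> tgt (tn f g) = tgt f \<otimes> tgt g"
  and mor_tn: "arr (tn f g) \<Longrightarrow> mor (tn f g) = tarr C (mor f) (mor g)" by (auto simp: tn_def split: if_splits)

lemma ar_eqI: "arr f \<Longrightarrow> arr g \<Longrightarrow> src f = src g \<Longrightarrow> mor f = mor g \<Longrightarrow> tgt f = tgt g \<Longrightarrow> f = g"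
  by (metis arr_Some_ex)
lemma ok_cases: "ok f \<Longrightarrow> (f = None \<Longrightarrow> P) \<Longrightarrow> (arr f \<Longrightarrow> P) \<Longrightarrow> P" by (auto simp: ok_def)

lemma cp_assoc[simp]: "(h \<bullet> g) \<bullet> f = h \<bullet> (g \<bullet> f)"
proof (cases "arr f \<and> arr g \<and> arr h \<and> src h = tgt g \<and> src g = tgt f")
  case True
  have "cmp C (cmp C (mor h) (mor g)) (mor f) = cmp C (mor h) (cmp C (mor g) (mor f))"
    using True arrD[of f] arrD[of g] arrD[of h] by (intro cmp_assoc[symmetric, of "src f" "tgt f" "tgt g" "tgt h"]) auto
  thus ?thesis using True by (intro ar_eqI) (auto simp: mor_cp)
next
  case False
  hence "\<not> arr ((h \<bullet> g) \<bullet> f)" "\<not> arr (h \<bullet> (g \<bullet> f))" by auto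
  moreover have "ok ((h \<bullet> g) \<bullet> f)" "ok (h \<bullet> (g \<bullet> f))" by auto
  ultimately show ?thesis by (auto simp: ok_def)
qed

lemma cp_IDl[simp]: "ok f \<Longrightarrow> tgt f = a \<Longrightarrow> ID a \<bullet> f = f"
  by (erule ok_cases) (auto intro!: ar_eqI simp: mor_cp mor_ID arrD cmp_idl[OF arrD(1) arrD(2) arrD(3)])
lemma cp_IDr[simp]: "ok f \<Longrightarrow> src f = a \<Longrightarrow> f \<bullet> ID a = f"
  by (erule ok_cases) (auto intro!: ar_eqI simp: mor_cp mor_ID arrD cmp_idr[OF arrD(1) arrD(2) arrD(3)])
lemma cp_IDl2[simp]: "tgt p = a \<Longrightarrow> ID a \<bullet> (p \<bullet> r) = p \<bullet> r"
proof (cases "arr (p \<bullet> r)")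
  case True
  assume "tgt p = a"
  thus ?thesis using True by (subst cp_IDl) auto
next
  case False
  thus ?thesis using ok_cp[of p r] by (auto simp: ok_def simp del: arr_cp_iff)
qed
lemma cp_IDmid[simp]: "src p = a \<Longrightarrow> p \<bullet> (ID a \<bullet> r) = p \<bullet> r"
proof -
  assume a: "src p = a"
  show ?thesis
  proof (cases "arr r \<and> tgt r = a")
    case True thus ?thesis by (subst cp_IDl) (auto simp: ok_def)
  next
    case False
    hence "\<not> arr (p \<bullet> (ID a \<bullet> r))" "\<not> arr (p \<bullet> r)" using a by auto
    moreover have "ok (p \<bullet> (ID a \<bullet> r))" "ok (p \<bullet> r)" by auto
    ultimately show ?thesis by (auto simp: ok_def)
  qed
qed

lemma W_ID[simp]: "a \<in> Ob \<Longrightarrow> L \<in> Ob \<Longrightarrow> R \<in> Ob \<Longrightarrow> W L (ID a) R = ID (L \<otimes> (a \<otimes> R))"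
  by (intro ar_eqI) (auto simp: mor_W mor_ID tarr_id)

lemma tarr_cmp_id_l: "a \<in> Ob \<Longrightarrow> b \<in> Ob \<Longrightarrow> c \<in> Ob \<Longrightarrow> L \<in> Ob \<Longrightarrow> f \<in> Hom C a b \<Longrightarrow> g \<in> Hom C b c \<Longrightarrow>
  tarr C (idm C L) (cmp C g f) = cmp C (tarr C (idm C L) g) (tarr C (idm C L) f)"
  using interch[of L L L a b c "idm C L" "idm C L" f g] by (simp add: id_hom cmp_idl)
lemma tarr_cmp_id_r: "a \<in> Ob \<Longrightarrow> b \<in> Ob \<Longrightarrow> c \<in> Ob \<Longrightarrow> R \<in> Ob \<Longrightarrow> f \<in> Hom C a b \<Longrightarrow> g \<in> Hom C b c \<Longrightarrow>
  tarr C (cmp C g f) (idm C R) = cmp C (tarr C g (idm C R)) (tarr C f (idm C R))"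
  using interch[of a b c R R R f g "idm C R" "idm C R"] by (simp add: id_hom cmp_idl)

lemma W_cp[simp]: "L \<in> Ob \<Longrightarrow> R \<in> Ob \<Longrightarrow> src g = tgt f \<Longrightarrow> W L (g \<bullet> f) R = W L g R \<bullet> W L f R"
proof (cases "arr f \<and> arr g")
  case True
  assume a: "L \<in> Ob" "R \<in> Ob" "src g = tgt f"
  hence h: "src f \<in> Ob" "tgt f \<in> Ob" "tgt g \<in> Ob" "mor f \<in> Hom C (src f) (tgt f)" "mor g \<in> Hom C (tgt f) (tgt g)"
    using True arrD[of g] by auto
  have "tarr C (cmp C (mor g) (mor f)) (idm C R) = cmp C (tarr C (mor g) (idm C R)) (tarr C (mor f) (idm C R))"
    using h a by (intro tarr_cmp_id_r) auto
  moreover have "tarr C (idm C L) (cmp C (tarr C (mor g) (idm C R)) (tarr C (mor f) (idm C R)))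
    = cmp C (tarr C (idm C L) (tarr C (mor g) (idm C R))) (tarr C (idm C L) (tarr C (mor f) (idm C R)))"
    using h a by (intro tarr_cmp_id_l[where a="src f \<otimes> R" and b="tgt f \<otimes> R" and c="tgt g \<otimes> R"]) (auto intro!: tarr_hom id_hom)
  ultimately show ?thesis using a True by (intro ar_eqI) (auto simp: mor_W mor_cp)
next
  case False thus ?thesis by (auto simp: W_def cp_def)
qed

lemma W_W[simp]: "L \<in> Ob \<Longrightarrow> R \<in> Ob \<Longrightarrow> L' \<in> Ob \<Longrightarrow> R' \<in> Ob \<Longrightarrow>
   W L (W L' f R') R = W (L \<otimes> L') f (R' \<otimes> R)"
proof (cases "arr f")
  case True
  assume a: "L \<in> Ob" "R \<in> Ob" "L' \<in> Ob" "R' \<in> Ob"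
  let ?a = "src f" and ?b = "tgt f" and ?f = "mor f"
  have ab: "?a \<in> Ob" "?b \<in> Ob" "?f \<in> Hom C ?a ?b" using True by auto
  have "tarr C (idm C L) (tarr C (tarr C (idm C L') (tarr C ?f (idm C R'))) (idm C R))
      = tarr C (idm C L) (tarr C (idm C L') (tarr C (tarr C ?f (idm C R')) (idm C R)))"
    using a ab by (subst tarr_assoc[symmetric, where a=L' and b=L' and c="?a \<otimes> R'" and d="?b \<otimes> R'" and e=R and k=R])
      (auto intro!: tarr_hom id_hom)
  also have "\<dots> = tarr C (idm C L) (tarr C (idm C L') (tarr C ?f (tarr C (idm C R') (idm C R))))"
    using a ab by (subst tarr_assoc[symmetric, where a="?a" and b="?b" and c=R' and d=R' and e=R and k=R])
      (auto intro!: tarr_hom id_hom)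
  also have "\<dots> = tarr C (tarr C (idm C L) (idm C L')) (tarr C ?f (tarr C (idm C R') (idm C R)))"
    using a ab by (subst tarr_assoc[where a=L and b=L and c=L' and d=L' and e="?a \<otimes> (R' \<otimes> R)" and k="?b \<otimes> (R' \<otimes> R)"])
      (auto intro!: tarr_hom id_hom)
  finally show ?thesis using a ab True by (intro ar_eqI) (auto simp: mor_W tarr_id)
next
  case False thus ?thesis by (simp add: W_def)
qed

lemma W_tn: "L \<in> Ob \<Longrightarrow> R \<in> Ob \<Longrightarrow> W L f R = tn (ID L) (tn f (ID R))"
proof (cases "arr f")
  case True
  assume "L \<in> Ob" "R \<in> Ob"
  thus ?thesis using True by (intro ar_eqI) (auto simp: mor_W mor_tn mor_ID)
next
  case False
  hence "tn f (ID R) = None" by (simp add: tn_def)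
  moreover have "tn (ID L) None = None" by (simp add: tn_def)
  ultimately show ?thesis using False by (simp add: W_def)
qed
lemma tn_ID: "a \<in> Ob \<Longrightarrow> b \<in> Ob \<Longrightarrow> tn (ID a) (ID b) = ID (a \<otimes> b)"
  by (intro ar_eqI) (auto simp: mor_tn mor_ID tarr_id)
lemma tn_assoc: "arr f \<Longrightarrow> arr g \<Longrightarrow> arr h \<Longrightarrow> tn (tn f g) h = tn f (tn g h)"
  by (intro ar_eqI) (auto simp: mor_tn tarr_assoc[of "src f" "tgt f" "src g" "tgt g" "src h" "tgt h"])
lemma tn_cp: "arr f \<Longrightarrow> arr f' \<Longrightarrow> arr g \<Longrightarrow> arr g' \<Longrightarrow> src f' = tgt f \<Longrightarrow> src g' = tgt g \<Longrightarrow>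
   tn f' g' \<bullet> tn f g = tn (f' \<bullet> f) (g' \<bullet> g)"
proof -
  assume a: "arr f" "arr f'" "arr g" "arr g'" "src f' = tgt f" "src g' = tgt g"
  have "mor f' \<in> Hom C (tgt f) (tgt f')" "mor g' \<in> Hom C (tgt g) (tgt g')" using a arrD[of f'] arrD[of g'] by auto
  hence "tarr C (cmp C (mor f') (mor f)) (cmp C (mor g') (mor g)) = cmp C (tarr C (mor f') (mor g')) (tarr C (mor f) (mor g))"
    using a by (intro interch[of "src f" "tgt f" "tgt f'" "src g" "tgt g" "tgt g'"]) auto
  thus ?thesis using a by (intro ar_eqI) (auto simp: mor_tn mor_cp)
qed

lemma tnID3: "a \<in> Ob \<Longrightarrow> b \<in> Ob \<Longrightarrow> c \<in> Ob \<Longrightarrow> arr h \<Longrightarrow> tn (ID (a \<otimes> (b \<otimes> c))) h = tn (ID a) (tn (ID b) (tn (ID c) h))"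
proof -
  assume o: "a \<in> Ob" "b \<in> Ob" "c \<in> Ob" "arr h"
  have "ID (a \<otimes> (b \<otimes> c)) = tn (ID a) (tn (ID b) (ID c))" using o by (simp add: tn_ID)
  hence "tn (ID (a \<otimes> (b \<otimes> c))) h = tn (tn (ID a) (tn (ID b) (ID c))) h" by simp
  also have "\<dots> = tn (ID a) (tn (ID b) (tn (ID c) h))" using o by (simp add: tn_assoc)
  finally show ?thesis .
qed

lemma swap0: assumes "arr f" "arr g" "L \<in> Ob" "M \<in> Ob" "R \<in> Ob"
  shows "W L f (M \<otimes> (tgt g \<otimes> R)) \<bullet> W (L \<otimes> (src f \<otimes> M)) g R
       = W (L \<otimes> (tgt f \<otimes> M)) g R \<bullet> W L f (M \<otimes> (src g \<otimes> R))"
proof -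
  have o: "src f \<in> Ob" "tgt f \<in> Ob" "src g \<in> Ob" "tgt g \<in> Ob" using assms by auto
  have w1: "W L f (M \<otimes> (tgt g \<otimes> R)) = tn (ID L) (tn f (tn (ID M) (tn (ID (tgt g)) (ID R))))"
    using assms o by (simp add: W_tn tn_ID)
  have w2: "W (L \<otimes> (src f \<otimes> M)) g R = tn (ID L) (tn (ID (src f)) (tn (ID M) (tn g (ID R))))"
    using assms o by (simp add: W_tn tnID3)
  have w3: "W L f (M \<otimes> (src g \<otimes> R)) = tn (ID L) (tn f (tn (ID M) (tn (ID (src g)) (ID R))))"
    using assms o by (simp add: W_tn tn_ID)
  have w4: "W (L \<otimes> (tgt f \<otimes> M)) g R = tn (ID L) (tn (ID (tgt f)) (tn (ID M) (tn g (ID R))))"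
    using assms o by (simp add: W_tn tnID3)
  have "tn (ID L) (tn f (tn (ID M) (tn (ID (tgt g)) (ID R)))) \<bullet> tn (ID L) (tn (ID (src f)) (tn (ID M) (tn g (ID R))))
     = tn (ID L) (tn f (tn (ID M) (tn g (ID R))))"
    using assms o by (simp add: tn_cp)
  moreover have "tn (ID L) (tn (ID (tgt f)) (tn (ID M) (tn g (ID R)))) \<bullet> tn (ID L) (tn f (tn (ID M) (tn (ID (src g)) (ID R))))
     = tn (ID L) (tn f (tn (ID M) (tn g (ID R))))"
    using assms o by (simp add: tn_cp)
  ultimately show ?thesis unfolding w1 w2 w3 w4 by simp
qed

lemma swap1: assumes "ok f" "ok g" "L \<in> Ob" "M \<in> Ob" "R \<in> Ob"
  shows "W L f (M \<otimes> (tgt g \<otimes> R)) \<bullet> W (L \<otimes> (src f \<otimes> M)) g R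
       = W (L \<otimes> (tgt f \<otimes> M)) g R \<bullet> W L f (M \<otimes> (src g \<otimes> R))"
  using assms by (cases "arr f \<and> arr g") (auto simp: ok_def swap0)

text \<open>The interchange law in context form.  It can be used in both directions, so it is
  never a simp rule: proofs instantiate it explicitly at the arrows to be swapped.\<close>
lemma swL: "L \<in> Ob \<Longrightarrow> M \<in> Ob \<Longrightarrow> R \<in> Ob \<Longrightarrow> ok f \<Longrightarrow> ok g \<Longrightarrow> X1 = M \<otimes> (tgt g \<otimes> R) \<Longrightarrow> X2 = L \<otimes> (src f \<otimes> M) \<Longrightarrow>
  W L f X1 \<bullet> (W X2 g R \<bullet> r) = W (L \<otimes> (tgt f \<otimes> M)) g R \<bullet> (W L f (M \<otimes> (src g \<otimes> R)) \<bullet> r)"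
  using swap1[of f g L M R] by (simp add: cp_assoc[symmetric] del: cp_assoc)
lemma swR: "L \<in> Ob \<Longrightarrow> M \<in> Ob \<Longrightarrow> R \<in> Ob \<Longrightarrow> ok f \<Longrightarrow> ok g \<Longrightarrow> X1 = L \<otimes> (tgt f \<otimes> M) \<Longrightarrow> X2 = M \<otimes> (src g \<otimes> R) \<Longrightarrow>
  W X1 g R \<bullet> (W L f X2 \<bullet> r) = W L f (M \<otimes> (tgt g \<otimes> R)) \<bullet> (W (L \<otimes> (src f \<otimes> M)) g R \<bullet> r)"
  using swap1[of f g L M R] by (simp add: cp_assoc[symmetric] del: cp_assoc)

lemma W_I1: "ok f \<Longrightarrow> W I f I = f"
  by (erule ok_cases) (auto intro!: ar_eqI simp: mor_W tarr_unitL[of "src f \<otimes> I" "tgt f \<otimes> I"] tarr_unitR[of "src f" "tgt f"] id_hom)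

text \<open>Proofs in context form: two arrows with the same source are equal as soon as
  P \<bullet> r = Q \<bullet> r for every continuation r.  The diagrammatic equations below are proved
  this way, by rewriting right-nested composites with rules in the same context form,
  obtained from plain equations by cx and ctxR.\<close>
lemma ctx_eq: "(\<And>r. P \<bullet> r = Q \<bullet> r) \<Longrightarrow> arr P \<Longrightarrow> arr Q \<Longrightarrow> src P = src Q \<Longrightarrow> P = Q"
  by (metis cp_IDr arr_ok)

lemma cx: "P = Q \<Longrightarrow> W L P R \<bullet> r = W L Q R \<bullet> r" by simp
lemma ctxR: "P = Q \<Longrightarrow> P \<bullet> r = Q \<bullet> r" by simp

lemma tn_split: "arr f \<Longrightarrow> arr g \<Longrightarrow> tn f g = W I f (tgt g) \<bullet> W (src f) g I"
proof -
  assume a: "arr f" "arr g"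
  have "tn f g = tn (f \<bullet> ID (src f)) (ID (tgt g) \<bullet> g)" using a by simp
  also have "\<dots> = tn f (ID (tgt g)) \<bullet> tn (ID (src f)) g" using a by (simp add: tn_cp)
  also have "\<dots> = W I f (tgt g) \<bullet> W (src f) g I"
  proof -
    have h: "tarr C (mor f) (idm C (tgt g)) \<in> Hom C (src f \<otimes> tgt g) (tgt f \<otimes> tgt g)" using a by (intro tarr_hom) (auto intro: id_hom)
    have "tn f (ID (tgt g)) = W I f (tgt g)" using a
      by (intro ar_eqI) (auto simp: mor_tn mor_ID mor_W tarr_unitL[OF _ _ h])
    moreover have "tn (ID (src f)) g = W (src f) g I" using a
      by (intro ar_eqI) (auto simp: mor_tn mor_ID mor_W tarr_unitR[of "src g" "tgt g"])
    ultimately show ?thesis by simp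
  qed
  finally show ?thesis .
qed

definition iso_arr :: "('o,'m) ar \<Rightarrow> bool" where
  "iso_arr F \<longleftrightarrow> arr F \<and> (\<exists>G. arr G \<and> src G = tgt F \<and> tgt G = src F \<and> G \<bullet> F = ID (src F) \<and> F \<bullet> G = ID (tgt F))"

lemma iso_arr_cp: assumes "iso_arr F" "iso_arr G" "src F = tgt G" shows "iso_arr (F \<bullet> G)"
proof -
  obtain F' where F': "arr F'" "src F' = tgt F" "tgt F' = src F" "F' \<bullet> F = ID (src F)" "F \<bullet> F' = ID (tgt F)" using assms(1) iso_arr_def by auto
  obtain G' where G': "arr G'" "src G' = tgt G" "tgt G' = src G" "G' \<bullet> G = ID (src G)" "G \<bullet> G' = ID (tgt G)" using assms(2) iso_arr_def by auto
  have AF: "arr F" "arr G" using assms iso_arr_def by auto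
  have "(G' \<bullet> F') \<bullet> (F \<bullet> G) = G' \<bullet> ((F' \<bullet> F) \<bullet> G)" by simp
  also have "\<dots> = ID (src G)" using F' G' AF assms(3) by simp
  finally have 1: "(G' \<bullet> F') \<bullet> (F \<bullet> G) = ID (src G)" .
  have "(F \<bullet> G) \<bullet> (G' \<bullet> F') = F \<bullet> ((G \<bullet> G') \<bullet> F')" by simp
  also have "\<dots> = ID (tgt F)" using F' G' AF assms(3) by simp
  finally have 2: "(F \<bullet> G) \<bullet> (G' \<bullet> F') = ID (tgt F)" .
  show ?thesis unfolding iso_arr_def using AF F' G' assms(3) 1 2 by (intro conjI exI[of _ "G' \<bullet> F'"]) auto
qed

lemma iso_arr_cancel: assumes "iso_arr (F \<bullet> G)" "iso_arr G" "arr F" "src F = tgt G" shows "iso_arr F"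
proof -
  obtain G' where G': "arr G'" "src G' = tgt G" "tgt G' = src G" "G' \<bullet> G = ID (src G)" "G \<bullet> G' = ID (tgt G)" using assms(2) iso_arr_def by auto
  have AG: "arr G" using assms iso_arr_def by auto
  have iG': "iso_arr G'" unfolding iso_arr_def using G' AG by (intro conjI exI[of _ G]) auto
  have "iso_arr ((F \<bullet> G) \<bullet> G')" using G' AG assms by (intro iso_arr_cp[OF assms(1) iG']) auto
  moreover have "(F \<bullet> G) \<bullet> G' = F" using G' AG assms by simp
  ultimately show ?thesis by simp
qed

lemma iso_arr_cancel2: assumes "iso_arr (F \<bullet> G)" "iso_arr F" "arr G" "src F = tgt G" shows "iso_arr G"
proof -
  obtain F' where F': "arr F'" "src F' = tgt F" "tgt F' = src F" "F' \<bullet> F = ID (src F)" "F \<bullet> F' = ID (tgt F)" using assms(2) iso_arr_def by auto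
  have AF: "arr F" using assms iso_arr_def by auto
  have iF': "iso_arr F'" unfolding iso_arr_def using F' AF by (intro conjI exI[of _ F]) auto
  have "iso_arr (F' \<bullet> (F \<bullet> G))" using F' AF assms by (intro iso_arr_cp[OF iF' assms(1)]) auto
  moreover have "F' \<bullet> (F \<bullet> G) = G" using F' AF assms by (simp add: cp_assoc[symmetric] del: cp_assoc)
  ultimately show ?thesis by simp
qed

lemma iso_arr_W: assumes "iso_arr F" "L \<in> Ob" "R \<in> Ob" shows "iso_arr (W L F R)"
proof -
  obtain F' where F': "arr F'" "src F' = tgt F" "tgt F' = src F" "F' \<bullet> F = ID (src F)" "F \<bullet> F' = ID (tgt F)" using assms(1) iso_arr_def by auto
  have AF: "arr F" using assms iso_arr_def by auto
  have "W L F' R \<bullet> W L F R = ID (src (W L F R))" using F' AF assms by (simp add: W_cp[symmetric])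
  moreover have "W L F R \<bullet> W L F' R = ID (tgt (W L F R))" using F' AF assms by (simp add: W_cp[symmetric])
  ultimately show ?thesis unfolding iso_arr_def using F' AF assms by (intro conjI exI[of _ "W L F' R"]) auto
qed

lemma iso_iso_arr: "a \<in> Ob \<Longrightarrow> b \<in> Ob \<Longrightarrow> iso C f a b \<longleftrightarrow> iso_arr (mk a f b)"
proof
  assume o: "a \<in> Ob" "b \<in> Ob" and i: "iso C f a b"
  then obtain g where g: "f \<in> Hom C a b" "g \<in> Hom C b a" "cmp C g f = idm C a" "cmp C f g = idm C b" unfolding iso_def by auto
  have "mk b g a \<bullet> mk a f b = ID a" "mk a f b \<bullet> mk b g a = ID b" using g o
    by (auto intro!: ar_eqI simp: mor_cp mk_mor mor_ID)
  thus "iso_arr (mk a f b)" unfolding iso_arr_def using g o by (intro conjI exI[of _ "mk b g a"]) auto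
next
  assume o: "a \<in> Ob" "b \<in> Ob" and i: "iso_arr (mk a f b)"
  then obtain G where G: "arr G" "src G = b" "tgt G = a" "G \<bullet> mk a f b = ID a" "mk a f b \<bullet> G = ID b" and f: "f \<in> Hom C a b"
    unfolding iso_arr_def by auto
  have "cmp C (mor G) f = idm C a" using arg_cong[OF G(4), of mor] G(1-3) f o by (simp add: mor_cp mk_mor mor_ID)
  moreover have "cmp C f (mor G) = idm C b" using arg_cong[OF G(5), of mor] G(1-3) f o by (simp add: mor_cp mk_mor mor_ID)
  ultimately have "cmp C (mor G) f = idm C a" "cmp C f (mor G) = idm C b" by auto
  thus "iso C f a b" unfolding iso_def using G f arrD(3)[of G] by auto
qed

end

text \<open>For a coalgebra (B, Dl, El) and an algebra (Ab, Ml, Ul) of C, the arrows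
  B \<rightarrow> Ab form a monoid under convolution f * g = Ml (f \<otimes> g) Dl with unit Ul El.  We only
  need its consequence that convolution inverses are unique.\<close>
locale convolution = smc_calc C for C :: "('o,'m) smc" +
  fixes B Ab :: 'o and Ml Ul Dl El :: "('o,'m) ar"
  assumes B_ob[simp]: "B \<in> Ob" and Ab_ob[simp]: "Ab \<in> Ob"
  and Ml_arr[simp]: "arr Ml" and Ml_src[simp]: "src Ml = Ab \<otimes> Ab" and Ml_tgt[simp]: "tgt Ml = Ab"
  and Ul_arr[simp]: "arr Ul" and Ul_src[simp]: "src Ul = I" and Ul_tgt[simp]: "tgt Ul = Ab"
  and Dl_arr[simp]: "arr Dl" and Dl_src[simp]: "src Dl = B" and Dl_tgt[simp]: "tgt Dl = B \<otimes> B"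
  and El_arr[simp]: "arr El" and El_src[simp]: "src El = B" and El_tgt[simp]: "tgt El = I"
  and cv_as: "W I Ml I \<bullet> W I Ml Ab = W I Ml I \<bullet> W Ab Ml I"
  and cv_ul: "W I Ml I \<bullet> W I Ul Ab = ID Ab"
  and cv_ur: "W I Ml I \<bullet> W Ab Ul I = ID Ab"
  and cv_cas: "W I Dl B \<bullet> W I Dl I = W B Dl I \<bullet> W I Dl I"
  and cv_cul: "W I El B \<bullet> W I Dl I = ID B"
  and cv_cur: "W B El I \<bullet> W I Dl I = ID B"
begin

lemma q_as: "L \<in> Ob \<Longrightarrow> R \<in> Ob \<Longrightarrow> X = Ab \<otimes> R \<Longrightarrow> W L Ml R \<bullet> (W L Ml X \<bullet> r) = W L Ml R \<bullet> (W (L \<otimes> Ab) Ml R \<bullet> r)"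
  using cx[OF cv_as, of L R r] by simp
lemma q_ul: "L \<in> Ob \<Longrightarrow> R \<in> Ob \<Longrightarrow> X = Ab \<otimes> R \<Longrightarrow> W L Ml R \<bullet> (W L Ul X \<bullet> r) = ID (L \<otimes> (Ab \<otimes> R)) \<bullet> r"
  using cx[OF cv_ul, of L R r] by simp
lemma q_ur: "L \<in> Ob \<Longrightarrow> R \<in> Ob \<Longrightarrow> Y = L \<otimes> Ab \<Longrightarrow> W L Ml R \<bullet> (W Y Ul R \<bullet> r) = ID (L \<otimes> (Ab \<otimes> R)) \<bullet> r"
  using cx[OF cv_ur, of L R r] by simp
lemma q_cas: "L \<in> Ob \<Longrightarrow> R \<in> Ob \<Longrightarrow> X = B \<otimes> R \<Longrightarrow> W L Dl X \<bullet> (W L Dl R \<bullet> r) = W (L \<otimes> B) Dl R \<bullet> (W L Dl R \<bullet> r)"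
  using cx[OF cv_cas, of L R r] by simp
lemma q_cul: "L \<in> Ob \<Longrightarrow> R \<in> Ob \<Longrightarrow> X = B \<otimes> R \<Longrightarrow> W L El X \<bullet> (W L Dl R \<bullet> r) = ID (L \<otimes> (B \<otimes> R)) \<bullet> r"
  using cx[OF cv_cul, of L R r] by simp
lemma q_cur: "L \<in> Ob \<Longrightarrow> R \<in> Ob \<Longrightarrow> Y = L \<otimes> B \<Longrightarrow> W Y El R \<bullet> (W L Dl R \<bullet> r) = ID (L \<otimes> (B \<otimes> R)) \<bullet> r"
  using cx[OF cv_cur, of L R r] by simp

definition cv :: "('o,'m) ar \<Rightarrow> ('o,'m) ar \<Rightarrow> ('o,'m) ar" where
  "cv f g = W I Ml I \<bullet> W I f Ab \<bullet> W B g I \<bullet> W I Dl I"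

definition "uc = W I Ul I \<bullet> W I El I"

abbreviation "hom f \<equiv> arr f \<and> src f = B \<and> tgt f = Ab"

lemma cv_assoc: assumes "hom f" "hom g" "hom h" shows "cv f (cv g h) = cv (cv f g) h"
proof (rule ctx_eq)
  fix r show "cv f (cv g h) \<bullet> r = cv (cv f g) h \<bullet> r"
    unfolding cv_def using assms
    by (simp add: swL[where f=f and g=Ml and M=I] swL[where f=f and g=g and M=I] swL[where f=f and g=h and M=B]
      swL[where f=Dl and g=h and M=I] q_as q_cas)
qed (use assms in \<open>auto simp: cv_def\<close>)

lemma cv_unitr: assumes "hom f" shows "cv f uc = f"
proof -
  have "cv f uc = W I f I"
  proof (rule ctx_eq)
    fix r show "cv f uc \<bullet> r = W I f I \<bullet> r"
      unfolding cv_def uc_def using assms by (simp add: q_cur swL[where f=f and g=Ul and M=I] q_ur)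
  qed (use assms in \<open>auto simp: cv_def uc_def\<close>)
  thus ?thesis using assms by (simp add: W_I1)
qed

lemma cv_unitl: assumes "hom f" shows "cv uc f = f"
proof -
  have "cv uc f = W I f I"
  proof (rule ctx_eq)
    fix r show "cv uc f \<bullet> r = W I f I \<bullet> r"
      unfolding cv_def uc_def using assms by (simp add: swL[where f=El and g=f and M=I] q_cul q_ul)
  qed (use assms in \<open>auto simp: cv_def uc_def\<close>)
  thus ?thesis using assms by (simp add: W_I1)
qed

lemma cv_inv_unique: assumes "hom f" "hom g" "hom h" "cv g f = uc" "cv f h = uc" shows "g = h"
proof -
  have "g = cv g uc" using assms by (simp add: cv_unitr)
  also have "\<dots> = cv g (cv f h)" using assms(5) by simp
  also have "\<dots> = cv (cv g f) h" using assms(1-3) by (intro cv_assoc)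
  also have "\<dots> = h" using assms by (simp add: cv_unitl)
  finally show ?thesis .
qed

end

text \<open>No compatibility between m and d is assumed: this is all
  the fusion-operator argument needs, and it will be applied both to A and to the
  co-opposite coalgebra structure of A.\<close>
locale alg_coalg = smc_calc C for C :: "('o,'m) smc" +
  fixes A :: 'o and sg :: "'o \<Rightarrow> ('o,'m) ar" and m u d e :: "('o,'m) ar"
  assumes A_ob[simp]: "A \<in> Ob"
  and sg_arr[simp]: "X \<in> Ob \<Longrightarrow> arr (sg X)"
  and sg_src[simp]: "X \<in> Ob \<Longrightarrow> src (sg X) = A \<otimes> X"
  and sg_tgt[simp]: "X \<in> Ob \<Longrightarrow> tgt (sg X) = X \<otimes> A"
  and sg_unit[simp]: "sg I = ID A"
  and sg_mon: "Y \<in> Ob \<Longrightarrow> Z \<in> Ob \<Longrightarrow> sg (Y \<otimes> Z) = W Y (sg Z) I \<bullet> W I (sg Y) Z"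
  and sg_nat: "arr f \<Longrightarrow> W I f A \<bullet> W I (sg (src f)) I = W I (sg (tgt f)) I \<bullet> W A f I"
  and m_arr[simp]: "arr m" and m_src[simp]: "src m = A \<otimes> A" and m_tgt[simp]: "tgt m = A"
  and u_arr[simp]: "arr u" and u_src[simp]: "src u = I" and u_tgt[simp]: "tgt u = A"
  and d_arr[simp]: "arr d" and d_src[simp]: "src d = A" and d_tgt[simp]: "tgt d = A \<otimes> A"
  and e_arr[simp]: "arr e" and e_src[simp]: "src e = A" and e_tgt[simp]: "tgt e = I"
  and ax_as: "W I m I \<bullet> W I m A = W I m I \<bullet> W A m I"
  and ax_ul: "W I m I \<bullet> W I u A = ID A"
  and ax_ur: "W I m I \<bullet> W A u I = ID A"
  and ax_cas: "W I d A \<bullet> W I d I = W A d I \<bullet> W I d I"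
  and ax_cul: "W I e A \<bullet> W I d I = ID A"
  and ax_cur: "W A e I \<bullet> W I d I = ID A"
  and ax_Zm: "X \<in> Ob \<Longrightarrow> W X m I \<bullet> W I (sg X) A \<bullet> W A (sg X) I = W I (sg X) I \<bullet> W I m X"
  and ax_Zu: "X \<in> Ob \<Longrightarrow> W X u I = W I (sg X) I \<bullet> W I u X"
  and ax_Zd: "X \<in> Ob \<Longrightarrow> W X d I \<bullet> W I (sg X) I = W I (sg X) A \<bullet> W A (sg X) I \<bullet> W I d X"
  and ax_Ze: "X \<in> Ob \<Longrightarrow> W X e I \<bullet> W I (sg X) I = W I e X"
begin

lemma r_as: "L \<in> Ob \<Longrightarrow> R \<in> Ob \<Longrightarrow> Y = L \<otimes> A \<Longrightarrow> W L m R \<bullet> (W Y m R \<bullet> r) = W L m R \<bullet> (W L m (A \<otimes> R) \<bullet> r)"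
  using cx[OF ax_as, of L R r] by simp
lemma r_ul: "L \<in> Ob \<Longrightarrow> R \<in> Ob \<Longrightarrow> X = A \<otimes> R \<Longrightarrow> W L m R \<bullet> (W L u X \<bullet> r) = ID (L \<otimes> (A \<otimes> R)) \<bullet> r"
  using cx[OF ax_ul, of L R r] by simp
lemma r_ur: "L \<in> Ob \<Longrightarrow> R \<in> Ob \<Longrightarrow> Y = L \<otimes> A \<Longrightarrow> W L m R \<bullet> (W Y u R \<bullet> r) = ID (L \<otimes> (A \<otimes> R)) \<bullet> r"
  using cx[OF ax_ur, of L R r] by simp
lemma r_cas: "L \<in> Ob \<Longrightarrow> R \<in> Ob \<Longrightarrow> X = A \<otimes> R \<Longrightarrow> W L d X \<bullet> (W L d R \<bullet> r) = W (L \<otimes> A) d R \<bullet> (W L d R \<bullet> r)"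
  using cx[OF ax_cas, of L R r] by simp
lemma r_cas': "L \<in> Ob \<Longrightarrow> R \<in> Ob \<Longrightarrow> Y = L \<otimes> A \<Longrightarrow> W Y d R \<bullet> (W L d R \<bullet> r) = W L d (A \<otimes> R) \<bullet> (W L d R \<bullet> r)"
  using cx[OF ax_cas, of L R r] by simp
lemma r_cul: "L \<in> Ob \<Longrightarrow> R \<in> Ob \<Longrightarrow> X = A \<otimes> R \<Longrightarrow> W L e X \<bullet> (W L d R \<bullet> r) = ID (L \<otimes> (A \<otimes> R)) \<bullet> r"
  using cx[OF ax_cul, of L R r] by simp
lemma r_cur: "L \<in> Ob \<Longrightarrow> R \<in> Ob \<Longrightarrow> Y = L \<otimes> A \<Longrightarrow> W Y e R \<bullet> (W L d R \<bullet> r) = ID (L \<otimes> (A \<otimes> R)) \<bullet> r"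
  using cx[OF ax_cur, of L R r] by simp
lemma r_Zm: "L \<in> Ob \<Longrightarrow> R \<in> Ob \<Longrightarrow> X \<in> Ob \<Longrightarrow> Y = L \<otimes> X \<Longrightarrow> R1 = A \<otimes> R \<Longrightarrow> L1 = L \<otimes> A \<Longrightarrow>
  W Y m R \<bullet> (W L (sg X) R1 \<bullet> (W L1 (sg X) R \<bullet> r)) = W L (sg X) R \<bullet> (W L m (X \<otimes> R) \<bullet> r)"
  using cx[OF ax_Zm, of X L R r] by simp
lemma r_Zm_rev: "L \<in> Ob \<Longrightarrow> R \<in> Ob \<Longrightarrow> X \<in> Ob \<Longrightarrow> Y = X \<otimes> R \<Longrightarrow>
  W L (sg X) R \<bullet> (W L m Y \<bullet> r) = W (L \<otimes> X) m R \<bullet> (W L (sg X) (A \<otimes> R) \<bullet> (W (L \<otimes> A) (sg X) R \<bullet> r))"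
  using cx[OF ax_Zm, of X L R r] by simp
lemma r_Zu: "L \<in> Ob \<Longrightarrow> R \<in> Ob \<Longrightarrow> X \<in> Ob \<Longrightarrow> Y = L \<otimes> X \<Longrightarrow> W Y u R \<bullet> r = W L (sg X) R \<bullet> (W L u (X \<otimes> R) \<bullet> r)"
  using cx[OF ax_Zu, of X L R r] by simp
lemma r_Zu': "L \<in> Ob \<Longrightarrow> R \<in> Ob \<Longrightarrow> X \<in> Ob \<Longrightarrow> R1 = X \<otimes> R \<Longrightarrow> W L (sg X) R \<bullet> (W L u R1 \<bullet> r) = W (L \<otimes> X) u R \<bullet> r"
  using cx[OF ax_Zu, of X L R r] by simp
lemma r_Zd: "L \<in> Ob \<Longrightarrow> R \<in> Ob \<Longrightarrow> X \<in> Ob \<Longrightarrow> Y = L \<otimes> X \<Longrightarrow>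
   W Y d R \<bullet> (W L (sg X) R \<bullet> r) = W L (sg X) (A \<otimes> R) \<bullet> (W (L \<otimes> A) (sg X) R \<bullet> (W L d (X \<otimes> R) \<bullet> r))"
  using cx[OF ax_Zd, of X L R r] by simp
lemma r_Ze: "L \<in> Ob \<Longrightarrow> R \<in> Ob \<Longrightarrow> X \<in> Ob \<Longrightarrow> Y = L \<otimes> X \<Longrightarrow>
   W Y e R \<bullet> (W L (sg X) R \<bullet> r) = W L e (X \<otimes> R) \<bullet> r"
  using cx[OF ax_Ze, of X L R r] by simp
lemma r_nat: "L \<in> Ob \<Longrightarrow> R \<in> Ob \<Longrightarrow> arr f \<Longrightarrow> R1 = A \<otimes> R \<Longrightarrow> X = src f \<Longrightarrow>
   W L f R1 \<bullet> (W L (sg X) R \<bullet> r) = W L (sg (tgt f)) R \<bullet> (W (L \<otimes> A) f R \<bullet> r)"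
  using cx[OF sg_nat, of f L R r] by simp
lemma r_nat': "L \<in> Ob \<Longrightarrow> R \<in> Ob \<Longrightarrow> arr f \<Longrightarrow> L1 = L \<otimes> A \<Longrightarrow> Y = tgt f \<Longrightarrow>
   W L (sg Y) R \<bullet> (W L1 f R \<bullet> r) = W L f (A \<otimes> R) \<bullet> (W L (sg (src f)) R \<bullet> r)"
  using cx[OF sg_nat, of f L R r] by simp

text \<open>The twisted fusion operator fus \<phi> X = (A \<otimes> X \<otimes> m)(A \<otimes> sg X \<otimes> A)(A \<otimes> \<phi> \<otimes> X \<otimes> A)(d \<otimes> X \<otimes> A)
  on A \<otimes> X \<otimes> A, for an endo-arrow \<phi> of A; fus id X \<otimes> Y is the left fusion operator H^l_(X,Y) of
  the bimonad A \<otimes> ?.\<close>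
definition fus :: "('o,'m) ar \<Rightarrow> 'o \<Rightarrow> ('o,'m) ar" where
  "fus \<phi> X = W (A \<otimes> X) m I \<bullet> W A (sg X) A \<bullet> W A \<phi> (X \<otimes> A) \<bullet> W I d (X \<otimes> A)"
definition conv :: "('o,'m) ar \<Rightarrow> ('o,'m) ar \<Rightarrow> ('o,'m) ar" where
  "conv \<phi> \<psi> = W I m I \<bullet> W I \<phi> A \<bullet> W A \<psi> I \<bullet> W I d I"
definition ue :: "('o,'m) ar" where "ue = W I u I \<bullet> W I e I"

lemma fus_comp: assumes "arr \<phi>" "src \<phi> = A" "tgt \<phi> = A" "arr \<psi>" "src \<psi> = A" "tgt \<psi> = A" "X \<in> Ob"
  shows "fus \<phi> X \<bullet> fus \<psi> X = fus (conv \<phi> \<psi>) X"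
proof (rule ctx_eq)
  fix r
  show "(fus \<phi> X \<bullet> fus \<psi> X) \<bullet> r = fus (conv \<phi> \<psi>) X \<bullet> r"
    unfolding fus_def conv_def using assms
    by (simp add: swL[where f=d and g=m and M=X] swL[where f=\<phi> and g=m and M=X] swL[where f="sg X" and g=m and M=I]
       r_as swL[where f=d and g="sg X" and M=I] swL[where f=d and g=\<psi> and M=I] r_cas
       swL[where f=\<phi> and g="sg X" and M=I] r_Zm)
qed (auto simp: fus_def conv_def assms)

lemma fus_ue: "X \<in> Ob \<Longrightarrow> fus ue X = ID (A \<otimes> (X \<otimes> A))"
proof (rule ctx_eq)
  fix r assume "X \<in> Ob"
  thus "fus ue X \<bullet> r = ID (A \<otimes> (X \<otimes> A)) \<bullet> r"
    unfolding fus_def ue_def by (simp add: r_Zu' r_ul r_ur r_cul r_cur)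
qed (auto simp: fus_def ue_def)

lemma fus_inverse_of_antipode: assumes "arr S" "src S = A" "tgt S = A" "conv (ID A) S = ue" "conv S (ID A) = ue" "X \<in> Ob"
  shows "fus (ID A) X \<bullet> fus S X = ID (A \<otimes> (X \<otimes> A))" "fus S X \<bullet> fus (ID A) X = ID (A \<otimes> (X \<otimes> A))"
proof -
  have "fus (ID A) X \<bullet> fus S X = fus (conv (ID A) S) X" using assms by (intro fus_comp) auto
  thus "fus (ID A) X \<bullet> fus S X = ID (A \<otimes> (X \<otimes> A))" using assms fus_ue by simp
  have "fus S X \<bullet> fus (ID A) X = fus (conv S (ID A)) X" using assms by (intro fus_comp) auto
  thus "fus S X \<bullet> fus (ID A) X = ID (A \<otimes> (X \<otimes> A))" using assms fus_ue by simp
qed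

lemma fus_extract: assumes "arr \<phi>" "src \<phi> = A" "tgt \<phi> = A"
  shows "W I e A \<bullet> fus \<phi> I \<bullet> W A u I = \<phi>"
proof -
  have "W I e A \<bullet> fus \<phi> I \<bullet> W A u I = W I \<phi> I"
  proof (rule ctx_eq)
    fix r show "(W I e A \<bullet> fus \<phi> I \<bullet> W A u I) \<bullet> r = W I \<phi> I \<bullet> r"
      unfolding fus_def using assms
      by (simp add: swL[where f=d and g=u and M=I] swL[where f=\<phi> and g=u and M=I] r_ur
         swL[where f=e and g=\<phi> and M=I] r_cul)
  qed (auto simp: fus_def assms)
  thus ?thesis using assms by (simp add: W_I1)
qed

lemma eu_swap: "W I e A \<bullet> W A u I = ue"
  unfolding ue_def by (rule ctx_eq) (simp_all add: swL[where f=e and g=u and M=I])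

text \<open>H1 = fus id I = (A \<otimes> m)(d \<otimes> A) is the fusion operator at the unit object; zt X
  is the half-braiding of A \<otimes> A past X.\<close>
abbreviation "H1 \<equiv> W A m I \<bullet> W I d A"
abbreviation "zt X \<equiv> W I (sg X) A \<bullet> W A (sg X) I"

lemma H1_fus: "fus (ID A) I = H1" by (simp add: fus_def)

lemma H1_lax: "X \<in> Ob \<Longrightarrow> W X H1 I \<bullet> zt X = zt X \<bullet> W I H1 X"
proof (rule ctx_eq)
  fix r assume "X \<in> Ob"
  thus "(W X H1 I \<bullet> zt X) \<bullet> r = (zt X \<bullet> W I H1 X) \<bullet> r"
    by (simp add: r_Zd swL[where f=d and g="sg X" and M=I] swR[where f="sg X" and g=m and M=I] r_Zm)
qed auto

lemma lax_of_inverse: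
  assumes f: "arr f" "src f = A" "tgt f = A" and g: "arr g" "src g = A" "tgt g = A"
    and fg: "f \<bullet> g = ID A" "g \<bullet> f = ID A" and X: "X \<in> Ob"
    and lax: "W X f I \<bullet> W I (sg X) I = W I (sg X) I \<bullet> W I f X"
  shows "W X g I \<bullet> W I (sg X) I = W I (sg X) I \<bullet> W I g X"
proof (rule ctx_eq)
  fix r
  have gf: "W L g R \<bullet> (W L f R \<bullet> q) = ID (L \<otimes> (A \<otimes> R)) \<bullet> q" if "L \<in> Ob" "R \<in> Ob" for L R q
    using cx[OF fg(2), of L R q] f g that by simp
  have fg': "W L f R \<bullet> (W L g R \<bullet> q) = ID (L \<otimes> (A \<otimes> R)) \<bullet> q" if "L \<in> Ob" "R \<in> Ob" for L R q
    using cx[OF fg(1), of L R q] f g that by simp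
  have lax_ctx: "W I (sg X) I \<bullet> (W I f X \<bullet> q) = W X f I \<bullet> (W I (sg X) I \<bullet> q)" for q
    using ctxR[OF lax[symmetric], of q] X f by simp
  have "(W X g I \<bullet> W I (sg X) I) \<bullet> r = W X g I \<bullet> (W I (sg X) I \<bullet> (W I f X \<bullet> (W I g X \<bullet> r)))"
    using X f g by (simp add: fg')
  also have "\<dots> = W X g I \<bullet> (W X f I \<bullet> (W I (sg X) I \<bullet> (W I g X \<bullet> r)))" by (simp add: lax_ctx)
  also have "\<dots> = (W I (sg X) I \<bullet> W I g X) \<bullet> r" using X f g by (simp add: gf)
  finally show "(W X g I \<bullet> W I (sg X) I) \<bullet> r = (W I (sg X) I \<bullet> W I g X) \<bullet> r" .
qed (use X g in auto)

text \<open>Using only that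
  H1 is a morphism of left A-modules and of A-comodules we show that so is G, that
  G equals fus S I for the candidate antipode S = (e \<otimes> A) G (A \<otimes> u), and that
  G, hence S, commutes with the half-braiding.\<close>

context
  fixes G :: "('o,'m) ar"
  assumes G: "arr G" "src G = A \<otimes> A" "tgt G = A \<otimes> A" "G \<bullet> H1 = ID (A \<otimes> A)" "H1 \<bullet> G = ID (A \<otimes> A)"
begin

lemma H1_inv_ctx:
  "G \<bullet> (W A m I \<bullet> (W I d A \<bullet> r)) = ID (A \<otimes> A) \<bullet> r"
  "W A m I \<bullet> (W I d A \<bullet> (G \<bullet> r)) = ID (A \<otimes> A) \<bullet> r"
  using ctxR[OF G(4), of r] ctxR[OF G(5), of r] by simp_all

lemma H1_inv_linear: "G \<bullet> (W A m I \<bullet> r) = W A m I \<bullet> (W I G A \<bullet> r)"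
proof -
  have H1_linear: "W A m I \<bullet> (W I d A \<bullet> (W A m I \<bullet> q)) = W A m I \<bullet> (W A m A \<bullet> (W I d (A \<otimes> A) \<bullet> q))" for q
    by (simp add: swL[where f=d and g=m and M=I] r_as)
  have "G \<bullet> (W A m I \<bullet> r) = G \<bullet> (W A m I \<bullet> (W I (H1 \<bullet> G) A \<bullet> r))"
    using G by simp
  also have "\<dots> = G \<bullet> (W A m I \<bullet> (W A m A \<bullet> (W I d (A \<otimes> A) \<bullet> (W I G A \<bullet> r))))"
    using G(1-3) by simp
  also have "\<dots> = G \<bullet> (W A m I \<bullet> (W I d A \<bullet> (W A m I \<bullet> (W I G A \<bullet> r))))" by (simp add: H1_linear)
  also have "\<dots> = W A m I \<bullet> (W I G A \<bullet> r)" by (simp add: H1_inv_ctx)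
  finally show ?thesis .
qed

lemma H1_inv_colinear: "W I d A \<bullet> (G \<bullet> r) = W A G I \<bullet> (W I d A \<bullet> r)"
proof -
  have H1_colinear: "W I d A \<bullet> (W A m I \<bullet> (W I d A \<bullet> q)) = W (A \<otimes> A) m I \<bullet> (W A d A \<bullet> (W I d A \<bullet> q))" for q
    by (simp add: swL[where f=d and g=m and M=I] r_cas)
  have "W I d A \<bullet> (G \<bullet> r) = W A (G \<bullet> H1) I \<bullet> (W I d A \<bullet> (G \<bullet> r))"
    using G by simp
  also have "\<dots> = W A G I \<bullet> (W I d A \<bullet> (W A m I \<bullet> (W I d A \<bullet> (G \<bullet> r))))"
    using G(1-3) by (simp add: H1_colinear)
  also have "\<dots> = W A G I \<bullet> (W I d A \<bullet> r)" using G(1-3) by (simp add: H1_inv_ctx)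
  finally show ?thesis .
qed

text \<open>A linear and colinear endomorphism of A \<otimes> A is determined by the
  endomorphism (e \<otimes> A) G (A \<otimes> u) of A; here: G = fus S I.\<close>
lemma H1_inv_eq_fus: "G = fus (W I e A \<bullet> G \<bullet> W A u I) I"
proof -
  define G' where "G' = G \<bullet> W A u I"
  define S where "S = W I e A \<bullet> G'"
  have G'a: "arr G'" "src G' = A" "tgt G' = A \<otimes> A" using G unfolding G'_def by auto
  have Sa: "arr S" "src S = A" "tgt S = A" using G'a unfolding S_def by auto
  have G_by_G': "G \<bullet> r = W A m I \<bullet> (W I G' A \<bullet> r)" for r
  proof -
    have "G \<bullet> r = G \<bullet> (W A m I \<bullet> (W A u A \<bullet> r))" using G(1-3) by (simp add: r_ul)
    also have "\<dots> = W A m I \<bullet> (W I G' A \<bullet> r)" using G(1-3) by (simp add: H1_inv_linear G'_def)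
    finally show ?thesis .
  qed
  have G'_colinear: "W I d A \<bullet> (G' \<bullet> r) = W A G' I \<bullet> (W I d I \<bullet> r)" for r
    unfolding G'_def using G(1-3) by (simp add: H1_inv_colinear swL[where f=d and g=u and M=I])
  have G'_by_S: "G' = W A S I \<bullet> W I d I"
  proof (rule ctx_eq)
    fix r
    have "G' \<bullet> r = W A e A \<bullet> (W I d A \<bullet> (G' \<bullet> r))" using G'a by (simp add: r_cur)
    also have "\<dots> = (W A S I \<bullet> W I d I) \<bullet> r" using G'a by (simp add: G'_colinear S_def)
    finally show "G' \<bullet> r = (W A S I \<bullet> W I d I) \<bullet> r" .
  qed (use G'a Sa in auto)
  have "G = fus S I"
    by (rule ctx_eq) (use G Sa in \<open>simp_all add: G_by_G' G'_by_S fus_def\<close>)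
  thus ?thesis unfolding S_def G'_def by simp
qed

lemma H1_inv_lax: assumes X: "X \<in> Ob"
  shows "W X G I \<bullet> (W I (sg X) A \<bullet> (W A (sg X) I \<bullet> r)) = W I (sg X) A \<bullet> (W A (sg X) I \<bullet> (W I G X \<bullet> r))"
proof -
  have H1c: "W (X \<otimes> A) m I \<bullet> (W X d A \<bullet> (W I (sg X) A \<bullet> (W A (sg X) I \<bullet> q)))
      = W I (sg X) A \<bullet> (W A (sg X) I \<bullet> (W A m X \<bullet> (W I d (A \<otimes> X) \<bullet> q)))" for q
    using ctxR[OF H1_lax[OF X], of q] X by simp
  have GH1: "W X G I \<bullet> (W X H1 I \<bullet> q) = ID (X \<otimes> (A \<otimes> A)) \<bullet> q" for q
    using ctxR[OF arg_cong[OF G(4), of "\<lambda>x. W X x I"], of q] X G(1-3) by simp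
  have "W X G I \<bullet> (zt X \<bullet> r) = W X G I \<bullet> (zt X \<bullet> (W I (H1 \<bullet> G) X \<bullet> r))"
    using G X by simp
  also have "\<dots> = W X G I \<bullet> (W X H1 I \<bullet> (zt X \<bullet> (W I G X \<bullet> r)))"
    using G(1-3) X by (simp add: H1c)
  also have "\<dots> = zt X \<bullet> (W I G X \<bullet> r)" using GH1 X by simp
  finally show ?thesis by simp
qed

end

text \<open>If H1 is invertible then A has an antipode S (as a morphism of the lax
  center): the inverse of H1 is fus S I, and multiplicativity of fus together with
  fus_extract turns H1 (fus S I) = id = (fus S I) H1 into S * id = ue = id * S.\<close>
lemma antipode_of_H1_inverse:
  assumes G: "arr G" "src G = A \<otimes> A" "tgt G = A \<otimes> A" "G \<bullet> H1 = ID (A \<otimes> A)" "H1 \<bullet> G = ID (A \<otimes> A)"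
  shows "\<exists>S. arr S \<and> src S = A \<and> tgt S = A \<and> conv (ID A) S = ue \<and> conv S (ID A) = ue
     \<and> (\<forall>X\<in>Ob. W X S I \<bullet> W I (sg X) I = W I (sg X) I \<bullet> W I S X)"
proof (intro exI conjI ballI)
  let ?S = "W I e A \<bullet> G \<bullet> W A u I"
  have GK: "G = fus ?S I" using H1_inv_eq_fus[OF G] .
  show Sa: "arr ?S" "src ?S = A" "tgt ?S = A" using G by auto
  have inverse_conv: "conv \<phi> \<psi> = ue" if "fus (conv \<phi> \<psi>) I = ID (A \<otimes> A)"
    "arr \<phi>" "src \<phi> = A" "tgt \<phi> = A" "arr \<psi>" "src \<psi> = A" "tgt \<psi> = A" for \<phi> \<psi>
  proof -
    have "conv \<phi> \<psi> = W I e A \<bullet> ID (A \<otimes> A) \<bullet> W A u I"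
      using fus_extract[of "conv \<phi> \<psi>"] that by (simp add: conv_def)
    thus ?thesis by (simp add: eu_swap)
  qed
  show "conv (ID A) ?S = ue"
    using fus_comp[of "ID A" ?S I] Sa G GK H1_fus by (intro inverse_conv) auto
  show "conv ?S (ID A) = ue"
    using fus_comp[of ?S "ID A" I] Sa G GK H1_fus by (intro inverse_conv) auto
  fix X assume X: "X \<in> Ob"
  show "W X ?S I \<bullet> W I (sg X) I = W I (sg X) I \<bullet> W I ?S X"
    by (rule ctx_eq) (use X G in \<open>simp_all add: swR[where f="sg X" and g=u and M=I] r_Zu[where L=A and X=X]
        H1_inv_lax r_Ze swL[where f=e and g="sg X" and M=I]\<close>)
qed

end

text \<open>Bialgebras in the lax center: in addition d and e are algebra maps, where A \<otimes> A
  carries the multiplication twisted by t = sg A.\<close>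
locale bialg = alg_coalg +
  assumes ax_comp: "W I d I \<bullet> W I m I = W I m A \<bullet> W (A \<otimes> A) m I \<bullet> W A (sg A) A \<bullet> W I d (A \<otimes> A) \<bullet> W A d I"
  and ax_du: "W I d I \<bullet> W I u I = W I u A \<bullet> W I u I"
  and ax_em: "W I e I \<bullet> W I m I = W I e I \<bullet> W A e I"
  and ax_eu: "W I e I \<bullet> W I u I = ID I"
begin

abbreviation "t \<equiv> sg A"
definition "mult2 = W I m A \<bullet> W (A \<otimes> A) m I \<bullet> W A t A"
definition "unit2 = W I u A \<bullet> W I u I"

lemma mult2_assoc: "W I mult2 I \<bullet> W I mult2 (A \<otimes> A) = W I mult2 I \<bullet> W (A \<otimes> A) mult2 I"
proof (rule ctx_eq)
  fix r show "(W I mult2 I \<bullet> W I mult2 (A \<otimes> A)) \<bullet> r = (W I mult2 I \<bullet> W (A \<otimes> A) mult2 I) \<bullet> r"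
    unfolding mult2_def
    by (simp add: swR[where f=m and g=t and M=I] r_Zm_rev r_nat'[where f=m] sg_mon[of A A] r_as
      swL[where f=t and g=m and M=I] swL[where f=t and g=m and M=A]
      swR[where f=m and g=m and M=I] swR[where f=m and g=m and M=A] swR[where f=t and g=t and M=I])
qed (auto simp: mult2_def)

definition antip where
  "antip S \<longleftrightarrow> arr S \<and> src S = A \<and> tgt S = A \<and> conv (ID A) S = ue \<and> conv S (ID A) = ue
     \<and> (\<forall>X\<in>Ob. W X S I \<bullet> W I (sg X) I = W I (sg X) I \<bullet> W I S X)"

lemma mult2_typ[simp]: "arr mult2" "src mult2 = A \<otimes> (A \<otimes> (A \<otimes> A))" "tgt mult2 = A \<otimes> A" by (auto simp: mult2_def)
lemma unit2_typ[simp]: "arr unit2" "src unit2 = I" "tgt unit2 = A \<otimes> A" by (auto simp: unit2_def)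

lemma mult2_ul: "W I mult2 I \<bullet> W I unit2 (A \<otimes> A) = ID (A \<otimes> A)"
proof (rule ctx_eq)
  fix r show "(W I mult2 I \<bullet> W I unit2 (A \<otimes> A)) \<bullet> r = ID (A \<otimes> A) \<bullet> r"
    unfolding mult2_def unit2_def by (simp add: swR[where f=u and g=t and M=I] r_Zu' swR[where f=u and g=m and M=A] r_ul)
qed (auto simp: mult2_def unit2_def)

lemma mult2_ur: "W I mult2 I \<bullet> W (A \<otimes> A) unit2 I = ID (A \<otimes> A)"
proof (rule ctx_eq)
  fix r show "(W I mult2 I \<bullet> W (A \<otimes> A) unit2 I) \<bullet> r = ID (A \<otimes> A) \<bullet> r"
    unfolding mult2_def unit2_def by (simp add: r_nat'[where f=u] swR[where f=u and g=m and M=I] r_ur)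
qed (auto simp: mult2_def unit2_def)

sublocale Q: convolution C A "A \<otimes> A" mult2 unit2 d e
  by unfold_locales (simp_all add: mult2_assoc mult2_ul mult2_ur ax_cas ax_cul ax_cur)

lemma r_compR: "L \<in> Ob \<Longrightarrow> R \<in> Ob \<Longrightarrow> X1 = A \<otimes> R \<Longrightarrow> Y2 = L \<otimes> (A \<otimes> A) \<Longrightarrow> Y3 = L \<otimes> A \<Longrightarrow> X3 = A \<otimes> R
  \<Longrightarrow> X4 = A \<otimes> (A \<otimes> R) \<Longrightarrow> Y5 = L \<otimes> A \<Longrightarrow>
  W L m X1 \<bullet> (W Y2 m R \<bullet> (W Y3 t X3 \<bullet> (W L d X4 \<bullet> (W Y5 d R \<bullet> r)))) = W L d R \<bullet> (W L m R \<bullet> r)"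
  using cx[OF ax_comp, of L R r] by simp
lemma r_du: "L \<in> Ob \<Longrightarrow> R \<in> Ob \<Longrightarrow> W L d R \<bullet> (W L u R \<bullet> r) = W L u (A \<otimes> R) \<bullet> (W L u R \<bullet> r)"
  using cx[OF ax_du, of L R r] by simp
lemma r_em: "L \<in> Ob \<Longrightarrow> R \<in> Ob \<Longrightarrow> W L e R \<bullet> (W L m R \<bullet> r) = W L e R \<bullet> (W (L \<otimes> A) e R \<bullet> r)"
  using cx[OF ax_em, of L R r] by simp
lemma r_eu: "L \<in> Ob \<Longrightarrow> R \<in> Ob \<Longrightarrow> W L e R \<bullet> (W L u R \<bullet> r) = ID (L \<otimes> R) \<bullet> r"
  using cx[OF ax_eu, of L R r] by simp

lemma antipD: assumes "antip S"
  shows "arr S" "src S = A" "tgt S = A"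
  "\<And>L R Y r. L \<in> Ob \<Longrightarrow> R \<in> Ob \<Longrightarrow> Y = L \<otimes> A \<Longrightarrow> W L m R \<bullet> (W Y S R \<bullet> (W L d R \<bullet> r)) = W L u R \<bullet> (W L e R \<bullet> r)"
  "\<And>L R X r. L \<in> Ob \<Longrightarrow> R \<in> Ob \<Longrightarrow> X = A \<otimes> R \<Longrightarrow> W L m R \<bullet> (W L S X \<bullet> (W L d R \<bullet> r)) = W L u R \<bullet> (W L e R \<bullet> r)"
  "\<And>L R Z X r. L \<in> Ob \<Longrightarrow> R \<in> Ob \<Longrightarrow> Z \<in> Ob \<Longrightarrow> X = Z \<otimes> R \<Longrightarrow> W L (sg Z) R \<bullet> (W L S X \<bullet> r) = W (L \<otimes> Z) S R \<bullet> (W L (sg Z) R \<bullet> r)"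
proof -
  have a: "arr S" "src S = A" "tgt S = A" "conv (ID A) S = ue" "conv S (ID A) = ue"
    "\<And>X. X \<in> Ob \<Longrightarrow> W X S I \<bullet> W I (sg X) I = W I (sg X) I \<bullet> W I S X"
    using assms unfolding antip_def by auto
  show "arr S" "src S = A" "tgt S = A" using a by auto
  show "\<And>L R Y r. L \<in> Ob \<Longrightarrow> R \<in> Ob \<Longrightarrow> Y = L \<otimes> A \<Longrightarrow> W L m R \<bullet> (W Y S R \<bullet> (W L d R \<bullet> r)) = W L u R \<bullet> (W L e R \<bullet> r)"
    subgoal for L R Y r using cx[OF a(4), of L R r] a by (simp add: conv_def ue_def) done
  show "\<And>L R X r. L \<in> Ob \<Longrightarrow> R \<in> Ob \<Longrightarrow> X = A \<otimes> R \<Longrightarrow> W L m R \<bullet> (W L S X \<bullet> (W L d R \<bullet> r)) = W L u R \<bullet> (W L e R \<bullet> r)"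
    subgoal for L R X r using cx[OF a(5), of L R r] a by (simp add: conv_def ue_def) done
  show "\<And>L R Z X r. L \<in> Ob \<Longrightarrow> R \<in> Ob \<Longrightarrow> Z \<in> Ob \<Longrightarrow> X = Z \<otimes> R \<Longrightarrow> W L (sg Z) R \<bullet> (W L S X \<bullet> r) = W (L \<otimes> Z) S R \<bullet> (W L (sg Z) R \<bullet> r)"
    subgoal for L R Z X r using cx[OF a(6)[of Z], of L R r] a(1-3) by simp done
qed

lemma r_fold: "L \<in> Ob \<Longrightarrow> R \<in> Ob \<Longrightarrow> Yo \<in> Ob \<Longrightarrow> Z \<in> Ob \<Longrightarrow> Y = L \<otimes> Yo \<Longrightarrow> X = Z \<otimes> R \<Longrightarrow>
   W Y (sg Z) R \<bullet> (W L (sg Yo) X \<bullet> r) = W L (sg (Yo \<otimes> Z)) R \<bullet> r"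
  by (simp add: sg_mon)

text \<open>An antipode is anti-comultiplicative, d S = (S \<otimes> S) t d: both sides are convolution
  inverses of d in Q.\<close>
lemma anti_comult: assumes S: "antip S"
  shows "W I d I \<bullet> W I S I = W I S A \<bullet> W A S I \<bullet> W I t I \<bullet> W I d I"
proof -
  note SD = antipD[OF S]
  have natf: "\<And>L R r. L \<in> Ob \<Longrightarrow> R \<in> Ob \<Longrightarrow> W L m (A \<otimes> R) \<bullet> (W L S (A \<otimes> (A \<otimes> R)) \<bullet> (W L (sg (A \<otimes> A)) R \<bullet> r))
      = W L t R \<bullet> (W (L \<otimes> A) m R \<bullet> (W (L \<otimes> A) S (A \<otimes> R) \<bullet> r))"
  proof -
    fix L R r assume o: "L \<in> Ob" "R \<in> Ob"
    have "W I (W I m I \<bullet> W I S A) A \<bullet> W I (sg (src (W I m I \<bullet> W I S A))) I = W I (sg (tgt (W I m I \<bullet> W I S A))) I \<bullet> W A (W I m I \<bullet> W I S A) I"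
      by (rule sg_nat) (use SD in simp)
    from cx[OF this, of L R r] show "?thesis L R r" using o SD by simp
  qed
  let ?R = "W I S A \<bullet> W A S I \<bullet> W I t I \<bullet> W I d I"
  have hR: "Q.hom ?R" using SD by simp
  have hd: "Q.hom (W I d I)" by simp
  have hdS: "Q.hom (W I d I \<bullet> W I S I)" using SD by simp
  have a: "Q.cv (W I d I) (W I d I \<bullet> W I S I) = Q.uc"
  proof (rule ctx_eq)
    fix r show "Q.cv (W I d I) (W I d I \<bullet> W I S I) \<bullet> r = Q.uc \<bullet> r"
      unfolding Q.cv_def Q.uc_def unfolding mult2_def unit2_def using SD by (simp add: r_compR SD(4) r_du)
  qed (use SD in \<open>auto simp: Q.cv_def Q.uc_def\<close>)
  have b: "Q.cv ?R (W I d I) = Q.uc"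
  proof (rule ctx_eq)
    fix r show "Q.cv ?R (W I d I) \<bullet> r = Q.uc \<bullet> r"
      unfolding Q.cv_def Q.uc_def unfolding mult2_def unit2_def using SD
      by (simp add: swR[where f=S and g=t and M=I] SD(6) r_fold[where Yo=A and Z=A]
        swL[where f=S and g=S and L=I and M=A] swL[where f=m and g=m and L=I and M=I]
        swL[where f=m and g=S and M=I] natf swL[where f=d and g=d and L=I and M=I] r_cas[where L=I]
        r_cas'[where L=A] SD(5) r_cul r_nat'[where f=u] swR[where f=u and g=S and M=I] swR[where f=u and g=m and M=I])
  qed (use SD in \<open>auto simp: Q.cv_def Q.uc_def\<close>)
  have "?R = W I d I \<bullet> W I S I" using Q.cv_inv_unique[OF hd hR hdS b a] .
  thus ?thesis by simp
qed

definition "comult2 = W A t A \<bullet> W I d (A \<otimes> A) \<bullet> W A d I"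
definition "counit2 = W I e I \<bullet> W A e I"
lemma comult2_typ[simp]: "arr comult2" "src comult2 = A \<otimes> A" "tgt comult2 = A \<otimes> (A \<otimes> (A \<otimes> A))" by (auto simp: comult2_def)
lemma counit2_typ[simp]: "arr counit2" "src counit2 = A \<otimes> A" "tgt counit2 = I" by (auto simp: counit2_def)

lemma comult2_cas: "W I comult2 (A \<otimes> A) \<bullet> W I comult2 I = W (A \<otimes> A) comult2 I \<bullet> W I comult2 I"
proof (rule ctx_eq)
  fix r show "(W I comult2 (A \<otimes> A) \<bullet> W I comult2 I) \<bullet> r = (W (A \<otimes> A) comult2 I \<bullet> W I comult2 I) \<bullet> r"
    unfolding comult2_def
    by (simp add: r_Zd r_nat[where f=d] sg_mon[of A A] r_cas
      swL[where f=d and g=t and M=I] swL[where f=d and g=t and M=A]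
      swR[where f=t and g=d and M=I] swR[where f=t and g=d and M=A]
      swL[where f=d and g=d and M=I] swL[where f=d and g=d and M=A] swR[where f=t and g=t and M=I])
qed (auto simp: comult2_def)

lemma comult2_cul: "W I counit2 (A \<otimes> A) \<bullet> W I comult2 I = ID (A \<otimes> A)"
proof (rule ctx_eq)
  fix r show "(W I counit2 (A \<otimes> A) \<bullet> W I comult2 I) \<bullet> r = ID (A \<otimes> A) \<bullet> r"
    unfolding comult2_def counit2_def by (simp add: r_nat[where f=e] swR[where f=d and g=e and M=I] r_cul r_cur)
qed (auto simp: comult2_def counit2_def)

lemma comult2_cur: "W (A \<otimes> A) counit2 I \<bullet> W I comult2 I = ID (A \<otimes> A)"
proof (rule ctx_eq)
  fix r show "(W (A \<otimes> A) counit2 I \<bullet> W I comult2 I) \<bullet> r = ID (A \<otimes> A) \<bullet> r"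
    unfolding comult2_def counit2_def by (simp add: swR[where f=t and g=e and M=I] r_Ze swR[where f=d and g=e and M=A] r_cul r_cur)
qed (auto simp: comult2_def counit2_def)

sublocale P: convolution C "A \<otimes> A" A m u comult2 counit2
  by unfold_locales (simp_all add: comult2_cas comult2_cul comult2_cur ax_as ax_ul ax_ur)

lemma r_asR: "L \<in> Ob \<Longrightarrow> R \<in> Ob \<Longrightarrow> X = A \<otimes> R \<Longrightarrow> W L m R \<bullet> (W L m X \<bullet> r) = W L m R \<bullet> (W (L \<otimes> A) m R \<bullet> r)"
  using cx[OF ax_as, of L R r] by simp

text \<open>An antipode is anti-multiplicative, S m = m t (S \<otimes> S): both sides are convolution
  inverses of m in P.\<close>
lemma anti_mult: assumes S: "antip S"
  shows "W I S I \<bullet> W I m I = W I m I \<bullet> W I t I \<bullet> W I S A \<bullet> W A S I"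
proof -
  note SD = antipD[OF S]
  have natf: "\<And>L R r X1 Y2. L \<in> Ob \<Longrightarrow> R \<in> Ob \<Longrightarrow> X1 = A \<otimes> R \<Longrightarrow> Y2 = L \<otimes> A \<Longrightarrow> W L m X1 \<bullet> (W Y2 S X1 \<bullet> (W L (sg (A \<otimes> A)) R \<bullet> r))
      = W L t R \<bullet> (W (L \<otimes> A) m R \<bullet> (W (L \<otimes> (A \<otimes> A)) S R \<bullet> r))"
  proof -
    fix L R r X1 Y2 assume o: "L \<in> Ob" "R \<in> Ob" "X1 = A \<otimes> R" "Y2 = L \<otimes> A"
    have "W I (W I m I \<bullet> W A S I) A \<bullet> W I (sg (src (W I m I \<bullet> W A S I))) I = W I (sg (tgt (W I m I \<bullet> W A S I))) I \<bullet> W A (W I m I \<bullet> W A S I) I"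
      by (rule sg_nat) (use SD in simp)
    from cx[OF this, of L R r] show "?thesis L R r X1 Y2" using o SD by simp
  qed
  let ?R = "W I m I \<bullet> W I t I \<bullet> W I S A \<bullet> W A S I"
  have hR: "P.hom ?R" using SD by simp
  have hm: "P.hom (W I m I)" by simp
  have hSm: "P.hom (W I S I \<bullet> W I m I)" using SD by simp
  have a: "P.cv (W I S I \<bullet> W I m I) (W I m I) = P.uc"
  proof (rule ctx_eq)
    fix r show "P.cv (W I S I \<bullet> W I m I) (W I m I) \<bullet> r = P.uc \<bullet> r"
      unfolding P.cv_def P.uc_def unfolding comult2_def counit2_def using SD by (simp add: r_compR SD(4) SD(5) r_em)
  qed (use SD in \<open>auto simp: P.cv_def P.uc_def\<close>)
  have b: "P.cv (W I m I) ?R = P.uc"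
  proof (rule ctx_eq)
    fix r show "P.cv (W I m I) ?R \<bullet> r = P.uc \<bullet> r"
      unfolding P.cv_def P.uc_def unfolding comult2_def counit2_def using SD
      by (simp add: SD(6) r_nat'[where f=S] r_fold[where Yo=A and Z=A] r_asR[where L=I] r_as[where L=A]
        swL[where f=m and g=S and M=I] natf swR[where f=d and g=S and M=A] swR[where f=d and g=m and M=I]
        SD(4) SD(5) swL[where f=d and g=u and M=I] r_nat'[where f=u] swR[where f=u and g=S and M=I] r_ul)
  qed (use SD in \<open>auto simp: P.cv_def P.uc_def\<close>)
  have "W I S I \<bullet> W I m I = ?R" using P.cv_inv_unique[OF hm hSm hR a b] .
  thus ?thesis by simp
qed

lemma counit_antip: assumes "antip S" shows "W I e I \<bullet> W I S I = W I e I"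
proof -
  note SD = antipD[OF assms]
  have "W I e I \<bullet> W I S I = W I e I \<bullet> conv S (ID A)"
  proof (rule ctx_eq)
    fix r show "(W I e I \<bullet> W I S I) \<bullet> r = (W I e I \<bullet> conv S (ID A)) \<bullet> r"
      unfolding conv_def using SD by (simp add: r_em swR[where f=S and g=e and M=I] r_cur)
  qed (use SD in \<open>auto simp: conv_def\<close>)
  also have "\<dots> = W I e I" using assms ax_eu by (simp add: antip_def ue_def cp_assoc[symmetric] del: cp_assoc)
  finally show ?thesis .
qed

lemma antip_unit: assumes "antip S" shows "W I S I \<bullet> W I u I = W I u I"
proof -
  note SD = antipD[OF assms]
  have "W I S I \<bullet> W I u I = conv S (ID A) \<bullet> W I u I"
  proof (rule ctx_eq)
    fix r show "(W I S I \<bullet> W I u I) \<bullet> r = (conv S (ID A) \<bullet> W I u I) \<bullet> r"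
      unfolding conv_def using SD by (simp add: r_du swL[where f=u and g=u and L=I and M=I] swL[where f=S and g=u and M=I] r_ur)
  qed (use SD in \<open>auto simp: conv_def\<close>)
  also have "\<dots> = W I u I" using assms ax_eu by (simp add: antip_def ue_def)
  finally show ?thesis .
qed

lemma antip_ctx: assumes S: "antip S" and LR: "L \<in> Ob" "R \<in> Ob"
  shows "W L d R \<bullet> (W L S R \<bullet> r) = W L S (A \<otimes> R) \<bullet> (W (L \<otimes> A) S R \<bullet> (W L t R \<bullet> (W L d R \<bullet> r)))"
    and "W L S R \<bullet> (W L m R \<bullet> r) = W L m R \<bullet> (W L t R \<bullet> (W L S (A \<otimes> R) \<bullet> (W (L \<otimes> A) S R \<bullet> r)))"
    and "W L e R \<bullet> (W L S R \<bullet> r) = W L e R \<bullet> r"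
  using cx[OF anti_comult[OF S], of L R r] cx[OF anti_mult[OF S], of L R r]
    cx[OF counit_antip[OF S], of L R r] antipD(1-3)[OF S] LR by simp_all

text \<open>If A \<otimes> sg X is invertible then so is sg X; the inverse is obtained by
  composing with e on the left and u on the right.\<close>
lemma braiding_iso_unwhisker: assumes X: "X \<in> Ob" and i: "iso_arr (W A (sg X) I)" shows "iso_arr (W I (sg X) I)"
proof -
  obtain G where G: "arr G" "src G = A \<otimes> (X \<otimes> A)" "tgt G = A \<otimes> (A \<otimes> X)" "G \<bullet> W A (sg X) I = ID (A \<otimes> (A \<otimes> X))"
     "W A (sg X) I \<bullet> G = ID (A \<otimes> (X \<otimes> A))"
    using i X unfolding iso_arr_def by auto
  have G_l: "G \<bullet> (W A (sg X) I \<bullet> r) = ID (A \<otimes> (A \<otimes> X)) \<bullet> r" for r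
    using ctxR[OF G(4), of r] by simp
  have G_r: "W A (sg X) I \<bullet> (G \<bullet> r) = ID (A \<otimes> (X \<otimes> A)) \<bullet> r" for r
    using ctxR[OF G(5), of r] by simp
  let ?T = "W I e (A \<otimes> X) \<bullet> G \<bullet> W I u (X \<otimes> A)"
  have 1: "?T \<bullet> W I (sg X) I = ID (A \<otimes> X)"
    by (rule ctx_eq) (use X G in \<open>simp_all add: swL[where f=u and g="sg X" and M=I] G_l r_eu\<close>)
  have 2: "W I (sg X) I \<bullet> ?T = ID (X \<otimes> A)"
    by (rule ctx_eq) (use X G in \<open>simp_all add: swR[where f=e and g="sg X" and M=I] G_r r_eu\<close>)
  show ?thesis unfolding iso_arr_def using 1 2 X G by (intro conjI exI[of _ ?T]) auto
qed

end

locale bialg_inv = bialg +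
  fixes tinv
  assumes tinv_arr[simp]: "arr tinv" and tinv_src[simp]: "src tinv = A \<otimes> A" and tinv_tgt[simp]: "tgt tinv = A \<otimes> A"
  and tinv_l: "W I tinv I \<bullet> W I t I = ID (A \<otimes> A)" and tinv_r: "W I t I \<bullet> W I tinv I = ID (A \<otimes> A)"
begin

lemma r_tinv_t: "L \<in> Ob \<Longrightarrow> R \<in> Ob \<Longrightarrow> W L tinv R \<bullet> (W L t R \<bullet> r) = ID (L \<otimes> (A \<otimes> (A \<otimes> R))) \<bullet> r"
  using cx[OF tinv_l, of L R r] by simp
lemma r_t_tinv: "L \<in> Ob \<Longrightarrow> R \<in> Ob \<Longrightarrow> W L t R \<bullet> (W L tinv R \<bullet> r) = ID (L \<otimes> (A \<otimes> (A \<otimes> R))) \<bullet> r"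
  using cx[OF tinv_r, of L R r] by simp

lemma conj_tinv: assumes "arr P" "src P = A \<otimes> A" "tgt P = A \<otimes> A" "arr Q" "src Q = A \<otimes> A" "tgt Q = A \<otimes> A"
  and "P \<bullet> W I t I = W I t I \<bullet> Q" shows "W I tinv I \<bullet> P = Q \<bullet> W I tinv I"
proof -
  have "W I tinv I \<bullet> P = W I tinv I \<bullet> P \<bullet> W I t I \<bullet> W I tinv I" using assms tinv_r by (simp add: cp_assoc[symmetric] del: cp_assoc)
  also have "\<dots> = W I tinv I \<bullet> W I t I \<bullet> Q \<bullet> W I tinv I" using assms(7) by (metis cp_assoc)
  also have "\<dots> = Q \<bullet> W I tinv I" using assms tinv_l by (simp add: cp_assoc[symmetric] del: cp_assoc)
  finally show ?thesis .
qed

lemma tinv_nat_l: assumes "arr f" "src f = A" "tgt f = A"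
  shows "W I tinv I \<bullet> W I f A = W A f I \<bullet> W I tinv I"
  using assms sg_nat[of f] by (intro conj_tinv) (auto simp: W_I1)

lemma tinv_nat_r: assumes "arr f" "src f = A" "tgt f = A" "W A f I \<bullet> W I t I = W I t I \<bullet> W I f A"
  shows "W I tinv I \<bullet> W A f I = W I f A \<bullet> W I tinv I"
  using assms by (intro conj_tinv) auto

lemma antip_commutes_t: "antip S \<Longrightarrow> W A S I \<bullet> W I t I = W I t I \<bullet> W I S A"
  unfolding antip_def by auto

lemma tinv_antip_ctx: assumes S: "antip S"
  shows "W I tinv I \<bullet> (W I S A \<bullet> r) = W A S I \<bullet> (W I tinv I \<bullet> r)"
    and "W I tinv I \<bullet> (W A S I \<bullet> r) = W I S A \<bullet> (W I tinv I \<bullet> r)"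
  using ctxR[OF tinv_nat_l[of S], of r] ctxR[OF tinv_nat_r[of S], of r] antipD[OF S] antip_commutes_t[OF S]
  by simp_all

text \<open>The inverse of an invertible antipode S is an opantipode: composing the two
  opantipode identities for S^-1 with S on the right and using that S is
  anti-comultiplicative and counital reduces them to those of S.\<close>
lemma inverse_antipode_is_opantipode:
  assumes S: "antip S" and Si: "arr Si" "src Si = A" "tgt Si = A" "S \<bullet> Si = ID A" "Si \<bullet> S = ID A"
  shows "W I m I \<bullet> W I tinv I \<bullet> W I Si A \<bullet> W I d I = ue" "W I m I \<bullet> W I tinv I \<bullet> W A Si I \<bullet> W I d I = ue"
    "\<forall>X\<in>Ob. W X Si I \<bullet> W I (sg X) I = W I (sg X) I \<bullet> W I Si X"
proof -
  note SD = antipD[OF S] and ctx = antip_ctx(1,3)[OF S] tinv_antip_ctx[OF S]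
  have SiS: "W L Si R \<bullet> (W L S R \<bullet> q) = ID (L \<otimes> (A \<otimes> R)) \<bullet> q" if "L \<in> Ob" "R \<in> Ob" for L R q
    using cx[OF Si(5), of L R q] SD Si(1-3) that by simp
  have cancel_S: "P = ue" if P: "arr P" "src P = A" "tgt P = A" "P \<bullet> W I S I = ue \<bullet> W I S I" for P
  proof -
    have "P = P \<bullet> (S \<bullet> Si)" using P Si by simp
    also have "\<dots> = (P \<bullet> W I S I) \<bullet> Si" using SD by (simp add: W_I1)
    also have "\<dots> = (ue \<bullet> W I S I) \<bullet> Si" using P by simp
    also have "\<dots> = ue" using SD Si by (simp add: W_I1 cp_assoc[symmetric] del: cp_assoc) (simp add: ue_def)
    finally show "P = ue" .
  qed
  show "W I m I \<bullet> W I tinv I \<bullet> W I Si A \<bullet> W I d I = ue"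
    by (rule cancel_S, rule_tac [4] ctx_eq)
      (use SD Si in \<open>simp_all add: ue_def ctx SiS r_tinv_t SD(5)\<close>)
  show "W I m I \<bullet> W I tinv I \<bullet> W A Si I \<bullet> W I d I = ue"
    by (rule cancel_S, rule_tac [4] ctx_eq)
      (use SD Si in \<open>simp_all add: ue_def ctx swR[where f=S and g=Si and M=I] SiS r_tinv_t SD(4)\<close>)
  show "\<forall>X\<in>Ob. W X Si I \<bullet> W I (sg X) I = W I (sg X) I \<bullet> W I Si X"
    using S Si SD by (auto simp: antip_def intro: lax_of_inverse)
qed

sublocale E: convolution C A A m u d e
  by unfold_locales (simp_all add: ax_as ax_ul ax_ur ax_cas ax_cul ax_cur)

lemma E_cv: "E.cv f g = conv f g" by (simp add: E.cv_def conv_def)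
lemma E_uc: "E.uc = ue" by (simp add: E.uc_def ue_def)

text \<open>Conversely, an arrow S' satisfying the first opantipode identity is inverse to the
  antipode S: it yields convolution identities S * (S' S) = ue and (S S') * S = ue, so
  S' S and S S' are convolution inverses of S, like the identity.\<close>
lemma opantipode_inverts_antipode:
  assumes S: "antip S" and S': "arr S'" "src S' = A" "tgt S' = A"
    and op: "W I m I \<bullet> W I tinv I \<bullet> W I S' A \<bullet> W I d I = ue"
  shows "S \<bullet> S' = ID A" "S' \<bullet> S = ID A"
proof -
  note SD = antipD[OF S] and ctx = antip_ctx(1,2)[OF S] tinv_antip_ctx[OF S]
  have n1S': "W I tinv I \<bullet> (W I S' A \<bullet> r) = W A S' I \<bullet> (W I tinv I \<bullet> r)" for r
    using ctxR[OF tinv_nat_l[of S'], of r] S' by simp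
  have hS: "E.hom S" "E.hom (ID A)" "E.hom (S' \<bullet> S)" "E.hom (S \<bullet> S')" using SD S' by auto
  have c1: "conv S (S' \<bullet> S) = ue"
  proof -
    have "(W I m I \<bullet> W I tinv I \<bullet> W I S' A \<bullet> W I d I) \<bullet> W I S I = conv S (S' \<bullet> S)"
      by (rule ctx_eq) (use SD S' in \<open>simp_all add: conv_def ctx(1,3,4) n1S' r_tinv_t
          swR[where f=S and g=S and L=I and M=I] swR[where f=S and g=S' and M=I]\<close>)
    moreover have "ue \<bullet> W I S I = ue" using counit_antip[OF S] SD(1-3) by (simp add: ue_def)
    ultimately show ?thesis using op by simp
  qed
  have c2: "conv (S \<bullet> S') S = ue"
  proof -
    have "W I S I \<bullet> (W I m I \<bullet> W I tinv I \<bullet> W I S' A \<bullet> W I d I) = conv (S \<bullet> S') S"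
      by (rule ctx_eq) (use SD S' in \<open>simp_all add: conv_def ctx(2) ctx(3,4)[symmetric] r_t_tinv
          swR[where f=S and g=S and L=I and M=I] swR[where f=S' and g=S and M=I]\<close>)
    moreover have "W I S I \<bullet> ue = ue" using antip_unit[OF S] SD(1-3) by (simp add: ue_def cp_assoc[symmetric] del: cp_assoc)
    ultimately show ?thesis using op by simp
  qed
  have cS: "conv (ID A) S = ue" "conv S (ID A) = ue" using S by (simp_all add: antip_def)
  show "S' \<bullet> S = ID A" using E.cv_inv_unique[OF hS(1) hS(2) hS(3)] c1 cS by (simp add: E_cv E_uc)
  show "S \<bullet> S' = ID A" using E.cv_inv_unique[OF hS(1) hS(4) hS(2)] c2 cS by (simp add: E_cv E_uc)
qed

text \<open>Since t and hence tinv are morphisms of the lax center and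
  satisfy the Yang-Baxter equation, cop_d = tinv d is again a coassociative comultiplication
  that is a morphism of the lax center, with the same counit.\<close>
lemma t_lax: "X \<in> Ob \<Longrightarrow> W X t I \<bullet> W I (sg X) A \<bullet> W A (sg X) I = W I (sg X) A \<bullet> W A (sg X) I \<bullet> W I t X"
proof (rule ctx_eq)
  fix r assume X: "X \<in> Ob"
  thus "(W X t I \<bullet> W I (sg X) A \<bullet> W A (sg X) I) \<bullet> r = (W I (sg X) A \<bullet> W A (sg X) I \<bullet> W I t X) \<bullet> r"
    by (simp add: r_fold[where Yo=A and Z=X] r_nat[where f="sg X"] sg_mon[of X A])
qed auto

lemma tinv_lax: assumes X: "X \<in> Ob" shows "W X tinv I \<bullet> (W I (sg X) A \<bullet> (W A (sg X) I \<bullet> r)) = W I (sg X) A \<bullet> (W A (sg X) I \<bullet> (W I tinv X \<bullet> r))"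
proof -
  have tl: "W X t I \<bullet> (W I (sg X) A \<bullet> (W A (sg X) I \<bullet> q)) = W I (sg X) A \<bullet> (W A (sg X) I \<bullet> (W I t X \<bullet> q))" for q
    using ctxR[OF t_lax[OF X], of q] X by simp
  have "W X tinv I \<bullet> (W I (sg X) A \<bullet> (W A (sg X) I \<bullet> r)) = W X tinv I \<bullet> (W I (sg X) A \<bullet> (W A (sg X) I \<bullet> (W I t X \<bullet> (W I tinv X \<bullet> r))))"
    using X by (simp add: r_t_tinv)
  also have "\<dots> = W X tinv I \<bullet> (W X t I \<bullet> (W I (sg X) A \<bullet> (W A (sg X) I \<bullet> (W I tinv X \<bullet> r))))" by (simp add: tl)
  also have "\<dots> = W I (sg X) A \<bullet> (W A (sg X) I \<bullet> (W I tinv X \<bullet> r))" using X by (simp add: r_tinv_t)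
  finally show ?thesis .
qed

lemma comult_tinv_l: "W I d A \<bullet> (W I tinv I \<bullet> r) = W A tinv I \<bullet> (W I tinv A \<bullet> (W A d I \<bullet> r))"
proof -
  have "W I d A \<bullet> (W I tinv I \<bullet> r) = W A tinv I \<bullet> (W I tinv A \<bullet> (W I t A \<bullet> (W A t I \<bullet> (W I d A \<bullet> (W I tinv I \<bullet> r)))))"
    by (simp add: r_tinv_t)
  also have "\<dots> = W A tinv I \<bullet> (W I tinv A \<bullet> (W A d I \<bullet> (W I t I \<bullet> (W I tinv I \<bullet> r))))" by (simp add: r_Zd)
  also have "\<dots> = W A tinv I \<bullet> (W I tinv A \<bullet> (W A d I \<bullet> r))" by (simp add: r_t_tinv)
  finally show ?thesis .
qed

lemma comult_tinv_r: "W A d I \<bullet> (W I tinv I \<bullet> r) = W I tinv A \<bullet> (W A tinv I \<bullet> (W I d A \<bullet> r))"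
proof -
  have "W A d I \<bullet> (W I tinv I \<bullet> r) = W I tinv A \<bullet> (W A tinv I \<bullet> (W A t I \<bullet> (W I t A \<bullet> (W A d I \<bullet> (W I tinv I \<bullet> r)))))"
    by (simp add: r_tinv_t)
  also have "\<dots> = W I tinv A \<bullet> (W A tinv I \<bullet> (W I d A \<bullet> (W I t I \<bullet> (W I tinv I \<bullet> r))))" by (simp add: r_nat[where f=d] sg_mon[of A A])
  also have "\<dots> = W I tinv A \<bullet> (W A tinv I \<bullet> (W I d A \<bullet> r))" by (simp add: r_t_tinv)
  finally show ?thesis .
qed

lemma yang_baxter: "W I t A \<bullet> (W A t I \<bullet> (W I t A \<bullet> r)) = W A t I \<bullet> (W I t A \<bullet> (W A t I \<bullet> r))"
  using cx[OF sg_nat[of t], of I I r] by (simp add: sg_mon[of A A])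

lemma yang_baxter_inv: "W I tinv A \<bullet> (W A tinv I \<bullet> (W I tinv A \<bullet> r)) = W A tinv I \<bullet> (W I tinv A \<bullet> (W A tinv I \<bullet> r))"
proof -
  have "W I tinv A \<bullet> (W A tinv I \<bullet> (W I tinv A \<bullet> r)) = W I tinv A \<bullet> (W A tinv I \<bullet> (W I tinv A \<bullet> (W A t I \<bullet> (W I t A \<bullet> (W A t I \<bullet>
      (W A tinv I \<bullet> (W I tinv A \<bullet> (W A tinv I \<bullet> r))))))))" by (simp add: r_t_tinv)
  also have "\<dots> = W I tinv A \<bullet> (W A tinv I \<bullet> (W I tinv A \<bullet> (W I t A \<bullet> (W A t I \<bullet> (W I t A \<bullet>
      (W A tinv I \<bullet> (W I tinv A \<bullet> (W A tinv I \<bullet> r))))))))" by (simp add: yang_baxter)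
  also have "\<dots> = W A tinv I \<bullet> (W I tinv A \<bullet> (W A tinv I \<bullet> r))" by (simp add: r_tinv_t)
  finally show ?thesis .
qed

lemma counit_tinv_l: "W I e A \<bullet> (W I tinv I \<bullet> r) = W A e I \<bullet> r"
proof -
  have "W A e I \<bullet> r = W A e I \<bullet> (W I t I \<bullet> (W I tinv I \<bullet> r))" by (simp add: r_t_tinv)
  also have "\<dots> = W I e A \<bullet> (W I tinv I \<bullet> r)" by (simp add: r_Ze)
  finally show ?thesis by simp
qed

lemma counit_tinv_r: "W A e I \<bullet> (W I tinv I \<bullet> r) = W I e A \<bullet> r"
proof -
  have "W I e A \<bullet> r = W I e A \<bullet> (W I t I \<bullet> (W I tinv I \<bullet> r))" by (simp add: r_t_tinv)
  also have "\<dots> = W A e I \<bullet> (W I tinv I \<bullet> r)" by (simp add: r_nat[where f=e])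
  finally show ?thesis by simp
qed

definition "cop_d = W I tinv I \<bullet> W I d I"

sublocale Cop: alg_coalg C A sg m u cop_d e
proof unfold_locales
  show "W I cop_d A \<bullet> W I cop_d I = W A cop_d I \<bullet> W I cop_d I"
    by (rule ctx_eq) (simp_all add: cop_d_def comult_tinv_r comult_tinv_l r_cas yang_baxter_inv)
  show "W I e A \<bullet> W I cop_d I = ID A" by (rule ctx_eq) (simp_all add: cop_d_def counit_tinv_l r_cur)
  show "W A e I \<bullet> W I cop_d I = ID A" by (rule ctx_eq) (simp_all add: cop_d_def counit_tinv_r r_cul)
  show "\<And>X. X \<in> Ob \<Longrightarrow> W X cop_d I \<bullet> W I (sg X) I = W I (sg X) A \<bullet> W A (sg X) I \<bullet> W I cop_d X"
    subgoal for X by (rule ctx_eq) (simp_all add: cop_d_def r_Zd tinv_lax) done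
qed (auto simp: cop_d_def sg_mon sg_nat ax_as ax_ul ax_ur ax_Zm ax_Ze intro: ax_Zu)

text \<open>The right fusion operator at the unit, (m \<otimes> A)(A \<otimes> t)(d \<otimes> A), is t composed with the
  left fusion operator of the co-opposite structure; this reduces the right theory to the
  left one.\<close>
lemma Hr1_via_cop: "W I m A \<bullet> W A t I \<bullet> W I d A = W I t I \<bullet> Cop.fus (ID A) I"
  unfolding Cop.fus_def unfolding cop_d_def
  by (rule ctx_eq) (simp_all add: r_nat'[where f=m] sg_mon[of A A] r_t_tinv)

text \<open>The opantipode identities for S' are the antipode identities of the co-opposite
  structure (for S' commuting with t in the second case).\<close>
lemma cop_ue: "Cop.ue = ue" by (simp add: Cop.ue_def ue_def)

lemma cop_conv_id_l: assumes S': "arr S'" "src S' = A" "tgt S' = A"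
  shows "Cop.conv (ID A) S' = W I m I \<bullet> W I tinv I \<bullet> W I S' A \<bullet> W I d I"
proof -
  have "Cop.conv (ID A) S' = W I m I \<bullet> (W A S' I \<bullet> W I tinv I) \<bullet> W I d I"
    using S' unfolding Cop.conv_def by (simp add: cop_d_def)
  also have "\<dots> = W I m I \<bullet> (W I tinv I \<bullet> W I S' A) \<bullet> W I d I" using tinv_nat_l[OF S'] by simp
  finally show ?thesis by simp
qed

lemma cop_conv_id_r: assumes S': "arr S'" "src S' = A" "tgt S' = A"
    and lax: "W A S' I \<bullet> W I t I = W I t I \<bullet> W I S' A"
  shows "Cop.conv S' (ID A) = W I m I \<bullet> W I tinv I \<bullet> W A S' I \<bullet> W I d I"
proof -
  have "Cop.conv S' (ID A) = W I m I \<bullet> (W I S' A \<bullet> W I tinv I) \<bullet> W I d I"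
    using S' unfolding Cop.conv_def by (simp add: cop_d_def)
  also have "\<dots> = W I m I \<bullet> (W I tinv I \<bullet> W A S' I) \<bullet> W I d I" using tinv_nat_r[OF S' lax] by simp
  finally show ?thesis by simp
qed
end

locale lcb = smc_calc C for C :: "('o,'m) smc" +
  fixes A :: 'o and s :: "'o \<Rightarrow> 'm" and mu un cm cu :: 'm
  assumes LCB: "lax_central_bialgebra C A s mu un cm cu"
begin

definition "gm = mk (A \<otimes> A) mu A"
definition "gu = mk I un A"
definition "gd = mk A cm (A \<otimes> A)"
definition "ge = mk A cu I"
definition "gs X = mk (A \<otimes> X) (s X) (X \<otimes> A)"

lemma LHB: "lax_half_braiding C A s" using LCB unfolding lax_central_bialgebra_def by auto
lemma A_ob[simp]: "A \<in> Ob" using LHB unfolding lax_half_braiding_def by auto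
lemma s_hom: "X \<in> Ob \<Longrightarrow> s X \<in> Hom C (A \<otimes> X) (X \<otimes> A)" using LHB unfolding lax_half_braiding_def by auto
lemma s_nat: "X \<in> Ob \<Longrightarrow> Y \<in> Ob \<Longrightarrow> f \<in> Hom C X Y \<Longrightarrow> cmp C (tarr C f (idm C A)) (s X) = cmp C (s Y) (tarr C (idm C A) f)"
  using LHB unfolding lax_half_braiding_def by auto
lemma s_mon: "Y \<in> Ob \<Longrightarrow> Z \<in> Ob \<Longrightarrow> s (Y \<otimes> Z) = cmp C (tarr C (idm C Y) (s Z)) (tarr C (s Y) (idm C Z))"
  using LHB unfolding lax_half_braiding_def by auto
lemma s_unit: "s I = idm C A" using LHB unfolding lax_half_braiding_def by auto

lemma mu_hom: "mu \<in> Hom C (A \<otimes> A) A" and mu_lax: "X \<in> Ob \<Longrightarrow> cmp C (tarr C (idm C X) mu) (cmp C (tarr C (s X) (idm C A)) (tarr C (idm C A) (s X))) = cmp C (s X) (tarr C mu (idm C X))"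
  using LCB unfolding lax_central_bialgebra_def zlax_hom_def zt_hb_def by auto
lemma un_hom: "un \<in> Hom C I A" and un_lax: "X \<in> Ob \<Longrightarrow> cmp C (tarr C (idm C X) un) (idm C X) = cmp C (s X) (tarr C un (idm C X))"
  using LCB unfolding lax_central_bialgebra_def zlax_hom_def zu_hb_def by auto
lemma un_lax': "X \<in> Ob \<Longrightarrow> tarr C (idm C X) un = cmp C (s X) (tarr C un (idm C X))"
proof -
  assume X: "X \<in> Ob"
  have "tarr C (idm C X) un \<in> Hom C (X \<otimes> I) (X \<otimes> A)" using X un_hom by (intro tarr_hom id_hom) auto
  hence "cmp C (tarr C (idm C X) un) (idm C X) = tarr C (idm C X) un" using X cmp_idr[of X "X \<otimes> A"] by simp
  thus ?thesis using un_lax[OF X] by simp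
qed
lemma cm_hom: "cm \<in> Hom C A (A \<otimes> A)" and cm_lax: "X \<in> Ob \<Longrightarrow> cmp C (tarr C (idm C X) cm) (s X) = cmp C (cmp C (tarr C (s X) (idm C A)) (tarr C (idm C A) (s X))) (tarr C cm (idm C X))"
  using LCB unfolding lax_central_bialgebra_def zlax_hom_def zt_hb_def by auto
lemma cm_lax': "X \<in> Ob \<Longrightarrow> cmp C (tarr C (idm C X) cm) (s X) = cmp C (tarr C (s X) (idm C A)) (cmp C (tarr C (idm C A) (s X)) (tarr C cm (idm C X)))"
proof -
  assume X: "X \<in> Ob"
  have h1: "tarr C cm (idm C X) \<in> Hom C (A \<otimes> X) (A \<otimes> (A \<otimes> X))"
    using tarr_hom[of A "A \<otimes> A" X X cm "idm C X"] X cm_hom id_hom[of X] by simp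
  have h2: "tarr C (idm C A) (s X) \<in> Hom C (A \<otimes> (A \<otimes> X)) (A \<otimes> (X \<otimes> A))"
    using tarr_hom[of A A "A \<otimes> X" "X \<otimes> A" "idm C A" "s X"] X s_hom[OF X] id_hom[of A] by simp
  have h3: "tarr C (s X) (idm C A) \<in> Hom C (A \<otimes> (X \<otimes> A)) (X \<otimes> (A \<otimes> A))"
    using tarr_hom[of "A \<otimes> X" "X \<otimes> A" A A "s X" "idm C A"] X s_hom[OF X] id_hom[of A] by simp
  show ?thesis using cm_lax[OF X] cmp_assoc[OF _ _ _ _ h1 h2 h3] X by simp
qed
lemma cu_hom: "cu \<in> Hom C A I" and cu_lax: "X \<in> Ob \<Longrightarrow> cmp C (tarr C (idm C X) cu) (s X) = cmp C (idm C X) (tarr C cu (idm C X))"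
  using LCB unfolding lax_central_bialgebra_def zlax_hom_def zu_hb_def by auto
lemma cu_lax': "X \<in> Ob \<Longrightarrow> cmp C (tarr C (idm C X) cu) (s X) = tarr C cu (idm C X)"
proof -
  assume X: "X \<in> Ob"
  have "tarr C cu (idm C X) \<in> Hom C (A \<otimes> X) X" using tarr_hom[of A I X X cu "idm C X"] X cu_hom id_hom[of X] by simp
  thus ?thesis using cu_lax[OF X] cmp_idl[of "A \<otimes> X" X] X by simp
qed
lemma bi_eqs:
  "cmp C mu (tarr C mu (idm C A)) = cmp C mu (tarr C (idm C A) mu)"
  "cmp C mu (tarr C un (idm C A)) = idm C A"
  "cmp C mu (tarr C (idm C A) un) = idm C A"
  "cmp C (tarr C cm (idm C A)) cm = cmp C (tarr C (idm C A) cm) cm"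
  "cmp C (tarr C cu (idm C A)) cm = idm C A"
  "cmp C (tarr C (idm C A) cu) cm = idm C A"
  "cmp C cm mu = cmp C (tarr C mu mu) (cmp C (tarr C (tarr C (idm C A) (s A)) (idm C A)) (tarr C cm cm))"
  "cmp C cm un = tarr C un un"
  "cmp C cu mu = tarr C cu cu"
  "cmp C cu un = idm C I"
  using LCB unfolding lax_central_bialgebra_def by auto

lemma g_typ[simp]: "arr gm" "src gm = A \<otimes> A" "tgt gm = A" "mor gm = mu"
  "arr gu" "src gu = I" "tgt gu = A" "mor gu = un"
  "arr gd" "src gd = A" "tgt gd = A \<otimes> A" "mor gd = cm"
  "arr ge" "src ge = A" "tgt ge = I" "mor ge = cu"
  using mu_hom un_hom cm_hom cu_hom by (auto simp: gm_def gu_def gd_def ge_def mk_mor)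
lemma gs_typ[simp]: "X \<in> Ob \<Longrightarrow> arr (gs X)" "X \<in> Ob \<Longrightarrow> src (gs X) = A \<otimes> X" "X \<in> Ob \<Longrightarrow> tgt (gs X) = X \<otimes> A"
  "X \<in> Ob \<Longrightarrow> mor (gs X) = s X"
  using s_hom by (auto simp: gs_def mk_mor)

lemmas msimps = mor_cp mor_tn mor_ID

lemma gs_unit: "gs I = ID A"
  using s_hom s_unit by (intro ar_eqI) (auto simp: mor_ID)

lemma gs_mon: assumes YZ: "Y \<in> Ob" "Z \<in> Ob"
  shows "gs (Y \<otimes> Z) = W Y (gs Z) I \<bullet> W I (gs Y) Z"
proof -
  have "gs (Y \<otimes> Z) = tn (ID Y) (gs Z) \<bullet> tn (gs Y) (ID Z)"
    using YZ by (intro ar_eqI) (auto simp: msimps s_mon)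
  thus ?thesis using YZ by (simp add: tn_split)
qed

lemma gs_nat: assumes f: "arr f"
  shows "W I f A \<bullet> W I (gs (src f)) I = W I (gs (tgt f)) I \<bullet> W A f I"
proof -
  have "tn f (ID A) \<bullet> gs (src f) = gs (tgt f) \<bullet> tn (ID A) f"
    using f by (intro ar_eqI) (auto simp: msimps s_nat)
  thus ?thesis using f by (simp add: tn_split W_I1)
qed

lemma gm_assoc: "W I gm I \<bullet> W I gm A = W I gm I \<bullet> W A gm I"
proof -
  have "gm \<bullet> tn gm (ID A) = gm \<bullet> tn (ID A) gm" by (intro ar_eqI) (auto simp: msimps bi_eqs)
  thus ?thesis by (simp add: tn_split W_I1)
qed

lemma gm_unit_l: "W I gm I \<bullet> W I gu A = ID A"
proof -
  have "gm \<bullet> tn gu (ID A) = ID A" by (intro ar_eqI) (auto simp: msimps bi_eqs)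
  thus ?thesis by (simp add: tn_split W_I1)
qed

lemma gm_unit_r: "W I gm I \<bullet> W A gu I = ID A"
proof -
  have "gm \<bullet> tn (ID A) gu = ID A" by (intro ar_eqI) (auto simp: msimps bi_eqs)
  thus ?thesis by (simp add: tn_split W_I1)
qed

lemma gd_coassoc: "W I gd A \<bullet> W I gd I = W A gd I \<bullet> W I gd I"
proof -
  have "tn gd (ID A) \<bullet> gd = tn (ID A) gd \<bullet> gd" by (intro ar_eqI) (auto simp: msimps bi_eqs)
  thus ?thesis by (simp add: tn_split W_I1)
qed

lemma gd_counit_l: "W I ge A \<bullet> W I gd I = ID A"
proof -
  have "tn ge (ID A) \<bullet> gd = ID A" by (intro ar_eqI) (auto simp: msimps bi_eqs)
  thus ?thesis by (simp add: tn_split W_I1)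
qed

lemma gd_counit_r: "W A ge I \<bullet> W I gd I = ID A"
proof -
  have "tn (ID A) ge \<bullet> gd = ID A" by (intro ar_eqI) (auto simp: msimps bi_eqs)
  thus ?thesis by (simp add: tn_split W_I1)
qed

lemma gm_lax: assumes X: "X \<in> Ob"
  shows "W X gm I \<bullet> W I (gs X) A \<bullet> W A (gs X) I = W I (gs X) I \<bullet> W I gm X"
proof -
  have "tn (ID X) gm \<bullet> (tn (gs X) (ID A) \<bullet> tn (ID A) (gs X)) = gs X \<bullet> tn gm (ID X)"
    using X by (intro ar_eqI) (auto simp: msimps mu_lax)
  thus ?thesis using X by (simp add: tn_split W_I1)
qed

lemma gu_lax: assumes X: "X \<in> Ob"
  shows "W X gu I = W I (gs X) I \<bullet> W I gu X"
proof -
  have "tn (ID X) gu = gs X \<bullet> tn gu (ID X)"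
    using X by (intro ar_eqI) (auto simp: msimps un_lax')
  thus ?thesis using X by (simp add: tn_split W_I1)
qed

lemma gd_lax: assumes X: "X \<in> Ob"
  shows "W X gd I \<bullet> W I (gs X) I = W I (gs X) A \<bullet> W A (gs X) I \<bullet> W I gd X"
proof -
  have "tn (ID X) gd \<bullet> gs X = (tn (gs X) (ID A) \<bullet> tn (ID A) (gs X)) \<bullet> tn gd (ID X)"
    using X by (intro ar_eqI) (auto simp: msimps cm_lax')
  thus ?thesis using X by (simp add: tn_split W_I1)
qed

lemma ge_lax: assumes X: "X \<in> Ob"
  shows "W X ge I \<bullet> W I (gs X) I = W I ge X"
proof -
  have "tn (ID X) ge \<bullet> gs X = tn ge (ID X)"
    using X by (intro ar_eqI) (auto simp: msimps cu_lax')
  thus ?thesis using X by (simp add: tn_split W_I1)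
qed

lemma gd_gm: "W I gd I \<bullet> W I gm I = W I gm A \<bullet> W (A \<otimes> A) gm I \<bullet> W A (gs A) A \<bullet> W I gd (A \<otimes> A) \<bullet> W A gd I"
proof -
  have "gd \<bullet> gm = tn gm gm \<bullet> (tn (tn (ID A) (gs A)) (ID A) \<bullet> tn gd gd)"
    by (intro ar_eqI) (auto simp: msimps bi_eqs)
  thus ?thesis by (simp add: tn_split W_I1)
qed

lemma gd_gu: "W I gd I \<bullet> W I gu I = W I gu A \<bullet> W I gu I"
proof -
  have "gd \<bullet> gu = tn gu gu" by (intro ar_eqI) (auto simp: msimps bi_eqs)
  thus ?thesis by (simp add: tn_split W_I1)
qed

lemma ge_gm: "W I ge I \<bullet> W I gm I = W I ge I \<bullet> W A ge I"
proof -
  have "ge \<bullet> gm = tn ge ge" by (intro ar_eqI) (auto simp: msimps bi_eqs)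
  thus ?thesis by (simp add: tn_split W_I1)
qed

lemma ge_gu: "W I ge I \<bullet> W I gu I = ID I"
proof -
  have "ge \<bullet> gu = ID I" by (intro ar_eqI) (auto simp: msimps bi_eqs)
  thus ?thesis by (simp add: tn_split W_I1)
qed

sublocale B: bialg C A gs gm gu gd ge
  by unfold_locales (fact gs_unit gs_mon gs_nat gm_assoc gm_unit_l gm_unit_r gd_coassoc
      gd_counit_l gd_counit_r gm_lax gu_lax gd_lax ge_lax gd_gm gd_gu ge_gm ge_gu | simp)+

lemma mk_mor_eq: "arr T \<Longrightarrow> mk (src T) (mor T) (tgt T) = T"
  by (rule ar_eqI) (auto simp: mk_mor)
lemma eq_mor: "arr T1 \<Longrightarrow> arr T2 \<Longrightarrow> src T1 = src T2 \<Longrightarrow> tgt T1 = tgt T2 \<Longrightarrow> T1 = T2 \<longleftrightarrow> mor T1 = mor T2"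
  using ar_eqI by blast

text \<open>Hr1 = (m \<otimes> A)(A \<otimes> s A)(d \<otimes> A) is the right fusion operator at the unit, and
  HrX X = (A \<otimes> s X)(Hr1 \<otimes> X).\<close>
definition "Hr1 = W I gm A \<bullet> W A (gs A) I \<bullet> W I gd A"
definition "HrX X = W A (gs X) I \<bullet> W I Hr1 X"

abbreviation "TT \<equiv> bm_T C A"
abbreviation "MT \<equiv> bm_mu C mu"
abbreviation "T2 \<equiv> bm_T2 C A s cm"

lemma fusion_l_arr: assumes "X \<in> Ob" "Y \<in> Ob"
  shows "mk (TT (X \<otimes> TT Y)) (fusion_l C TT MT T2 X Y) (TT X \<otimes> TT Y) = W I (B.fus (ID A) X) Y"
proof -
  let ?T = "tn (ID (A \<otimes> X)) (tn gm (ID Y)) \<bullet> tn (tn (ID A) (gs X) \<bullet> tn gd (ID X)) (ID (A \<otimes> Y))"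
  have a: "arr ?T" using assms by simp
  have "mk (TT (X \<otimes> TT Y)) (fusion_l C TT MT T2 X Y) (TT X \<otimes> TT Y) = mk (src ?T) (mor ?T) (tgt ?T)"
    using assms a by (simp add: fusion_l_def bm_T_def bm_mu_def bm_T2_def msimps)
  also have "\<dots> = ?T" using a by (rule mk_mor_eq)
  also have "\<dots> = W I (B.fus (ID A) X) Y" using assms by (simp add: B.fus_def tn_split)
  finally show ?thesis .
qed

lemma fusion_r_arr: assumes "X \<in> Ob" "Y \<in> Ob"
  shows "mk (TT (TT X \<otimes> Y)) (fusion_r C TT MT T2 X Y) (TT X \<otimes> TT Y) = W I (HrX X) Y"
proof -
  let ?T = "tn (tn gm (ID X)) (ID (A \<otimes> Y)) \<bullet> tn (tn (ID A) (gs (A \<otimes> X)) \<bullet> tn gd (ID (A \<otimes> X))) (ID Y)"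
  have a: "arr ?T" using assms by simp
  have "mk (TT (TT X \<otimes> Y)) (fusion_r C TT MT T2 X Y) (TT X \<otimes> TT Y) = mk (src ?T) (mor ?T) (tgt ?T)"
    using assms a by (simp add: fusion_r_def bm_T_def bm_mu_def bm_T2_def msimps)
  also have "\<dots> = ?T" using a by (rule mk_mor_eq)
  also have "\<dots> = W I (HrX X) Y"
    by (rule ctx_eq) (use assms in \<open>simp_all add: HrX_def Hr1_def tn_split B.sg_mon swL[where f=gm and g="gs X" and M=I]\<close>)
  finally show ?thesis .
qed

lemma fusion_l_iso: assumes "X \<in> Ob" "Y \<in> Ob"
  shows "iso C (fusion_l C TT MT T2 X Y) (TT (X \<otimes> TT Y)) (TT X \<otimes> TT Y) \<longleftrightarrow> iso_arr (W I (B.fus (ID A) X) Y)"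
proof -
  have "iso C (fusion_l C TT MT T2 X Y) (TT (X \<otimes> TT Y)) (TT X \<otimes> TT Y) \<longleftrightarrow> iso_arr (mk (TT (X \<otimes> TT Y)) (fusion_l C TT MT T2 X Y) (TT X \<otimes> TT Y))"
    by (rule iso_iso_arr) (use assms in \<open>simp_all add: bm_T_def\<close>)
  also have "\<dots> \<longleftrightarrow> iso_arr (W I (B.fus (ID A) X) Y)" by (simp only: fusion_l_arr[OF assms])
  finally show ?thesis .
qed

lemma fusion_r_iso: assumes "X \<in> Ob" "Y \<in> Ob"
  shows "iso C (fusion_r C TT MT T2 X Y) (TT (TT X \<otimes> Y)) (TT X \<otimes> TT Y) \<longleftrightarrow> iso_arr (W I (HrX X) Y)"
proof -
  have "iso C (fusion_r C TT MT T2 X Y) (TT (TT X \<otimes> Y)) (TT X \<otimes> TT Y) \<longleftrightarrow> iso_arr (mk (TT (TT X \<otimes> Y)) (fusion_r C TT MT T2 X Y) (TT X \<otimes> TT Y))"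
    by (rule iso_iso_arr) (use assms in \<open>simp_all add: bm_T_def\<close>)
  also have "\<dots> \<longleftrightarrow> iso_arr (W I (HrX X) Y)" by (simp only: fusion_r_arr[OF assms])
  finally show ?thesis .
qed

lemma fus_id_arr: "X \<in> Ob \<Longrightarrow> arr (B.fus (ID A) X)" by (simp add: B.fus_def)
lemma HrX_arr: "X \<in> Ob \<Longrightarrow> arr (HrX X)" by (simp add: HrX_def Hr1_def)

lemma left_hopf_iff: "left_hopf C TT MT T2 \<longleftrightarrow> (\<forall>X\<in>Ob. iso_arr (B.fus (ID A) X))"
proof -
  have "left_hopf C TT MT T2 \<longleftrightarrow> (\<forall>X\<in>Ob. \<forall>Y\<in>Ob. iso_arr (W I (B.fus (ID A) X) Y))"
    unfolding left_hopf_def using fusion_l_iso by simp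
  also have "\<dots> \<longleftrightarrow> (\<forall>X\<in>Ob. iso_arr (B.fus (ID A) X))"
    using iso_arr_W fus_id_arr by (metis W_I1 arr_ok unit_ob)
  finally show ?thesis .
qed

lemma left_prehopf_iff: "left_prehopf C TT MT T2 \<longleftrightarrow> iso_arr B.H1"
proof -
  have "left_prehopf C TT MT T2 \<longleftrightarrow> (\<forall>Y\<in>Ob. iso_arr (W I (B.fus (ID A) I) Y))"
    unfolding left_prehopf_def using fusion_l_iso[of I] by simp
  also have "\<dots> \<longleftrightarrow> iso_arr (B.fus (ID A) I)"
    using iso_arr_W fus_id_arr by (metis W_I1 arr_ok unit_ob)
  finally show ?thesis by (simp add: B.H1_fus)
qed

lemma right_hopf_iff: "right_hopf C TT MT T2 \<longleftrightarrow> (\<forall>X\<in>Ob. iso_arr (HrX X))"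
proof -
  have "right_hopf C TT MT T2 \<longleftrightarrow> (\<forall>X\<in>Ob. \<forall>Y\<in>Ob. iso_arr (W I (HrX X) Y))"
    unfolding right_hopf_def using fusion_r_iso by simp
  also have "\<dots> \<longleftrightarrow> (\<forall>X\<in>Ob. iso_arr (HrX X))"
    using iso_arr_W HrX_arr by (metis W_I1 arr_ok unit_ob)
  finally show ?thesis .
qed

lemma right_prehopf_iff: "right_prehopf C TT MT T2 \<longleftrightarrow> (\<forall>X\<in>Ob. iso_arr (HrX X))"
proof -
  have "right_prehopf C TT MT T2 \<longleftrightarrow> (\<forall>X\<in>Ob. iso_arr (W I (HrX X) I))"
    unfolding right_prehopf_def using fusion_r_iso[of _ I] by simp
  thus ?thesis using HrX_arr by (simp add: W_I1)
qed

lemma lax_iff: assumes "arr S" "src S = A" "tgt S = A" "X \<in> Ob"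
  shows "(W X S I \<bullet> W I (gs X) I = W I (gs X) I \<bullet> W I S X) \<longleftrightarrow> cmp C (tarr C (idm C X) (mor S)) (s X) = cmp C (s X) (tarr C (mor S) (idm C X))"
proof -
  have "(W X S I \<bullet> W I (gs X) I = W I (gs X) I \<bullet> W I S X) \<longleftrightarrow> (tn (ID X) S \<bullet> gs X = gs X \<bullet> tn S (ID X))"
    using assms by (simp add: tn_split W_I1)
  also have "\<dots> \<longleftrightarrow> mor (tn (ID X) S \<bullet> gs X) = mor (gs X \<bullet> tn S (ID X))" using assms by (intro eq_mor) auto
  also have "\<dots> \<longleftrightarrow> cmp C (tarr C (idm C X) (mor S)) (s X) = cmp C (s X) (tarr C (mor S) (idm C X))"
    using assms by (simp add: msimps)
  finally show ?thesis .
qed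

lemma convr_iff: assumes "arr S" "src S = A" "tgt S = A"
  shows "B.conv S (ID A) = B.ue \<longleftrightarrow> cmp C mu (cmp C (tarr C (mor S) (idm C A)) cm) = cmp C un cu"
proof -
  have "B.conv S (ID A) = B.ue \<longleftrightarrow> gm \<bullet> (tn S (ID A) \<bullet> gd) = gu \<bullet> ge"
    using assms by (simp add: B.conv_def B.ue_def tn_split W_I1)
  also have "\<dots> \<longleftrightarrow> mor (gm \<bullet> (tn S (ID A) \<bullet> gd)) = mor (gu \<bullet> ge)" using assms by (intro eq_mor) auto
  also have "\<dots> \<longleftrightarrow> cmp C mu (cmp C (tarr C (mor S) (idm C A)) cm) = cmp C un cu" using assms by (simp add: msimps)
  finally show ?thesis .
qed

lemma convl_iff: assumes "arr S" "src S = A" "tgt S = A"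
  shows "B.conv (ID A) S = B.ue \<longleftrightarrow> cmp C mu (cmp C (tarr C (idm C A) (mor S)) cm) = cmp C un cu"
proof -
  have "B.conv (ID A) S = B.ue \<longleftrightarrow> gm \<bullet> (tn (ID A) S \<bullet> gd) = gu \<bullet> ge"
    using assms by (simp add: B.conv_def B.ue_def tn_split W_I1)
  also have "\<dots> \<longleftrightarrow> mor (gm \<bullet> (tn (ID A) S \<bullet> gd)) = mor (gu \<bullet> ge)" using assms by (intro eq_mor) auto
  also have "\<dots> \<longleftrightarrow> cmp C mu (cmp C (tarr C (idm C A) (mor S)) cm) = cmp C un cu" using assms by (simp add: msimps)
  finally show ?thesis .
qed

lemma antip_iff: assumes "arr S" "src S = A" "tgt S = A"
  shows "B.antip S \<longleftrightarrow> is_antipode C A s mu un cm cu (mor S)"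
  using assms arrD(3)[of S] unfolding B.antip_def is_antipode_def zlax_hom_def
  by (auto simp: lax_iff convr_iff convl_iff)

lemma has_antipode_iff: "has_antipode C A s mu un cm cu \<longleftrightarrow> (\<exists>S. B.antip S)"
proof
  assume "has_antipode C A s mu un cm cu"
  then obtain S0 where S0: "is_antipode C A s mu un cm cu S0" unfolding has_antipode_def by auto
  hence h: "S0 \<in> Hom C A A" unfolding is_antipode_def zlax_hom_def by auto
  have "B.antip (mk A S0 A)" using antip_iff[of "mk A S0 A"] h S0 by (simp add: mk_mor)
  thus "\<exists>S. B.antip S" ..
next
  assume "\<exists>S. B.antip S"
  then obtain S where S: "B.antip S" by auto
  hence "arr S" "src S = A" "tgt S = A" by (auto simp: B.antip_def)
  thus "has_antipode C A s mu un cm cu" using antip_iff S unfolding has_antipode_def by auto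
qed

lemma invertible_hb_iff: "invertible_hb C A s \<longleftrightarrow> (\<forall>X\<in>Ob. iso_arr (gs X))"
  unfolding invertible_hb_def by (simp add: iso_iso_arr gs_def)

definition "opantipode_wrt S' tinv \<longleftrightarrow> arr S' \<and> src S' = A \<and> tgt S' = A \<and> (\<forall>X\<in>Ob. W X S' I \<bullet> W I (gs X) I = W I (gs X) I \<bullet> W I S' X)
  \<and> arr tinv \<and> src tinv = A \<otimes> A \<and> tgt tinv = A \<otimes> A \<and> W I tinv I \<bullet> W I (gs A) I = ID (A \<otimes> A) \<and> W I (gs A) I \<bullet> W I tinv I = ID (A \<otimes> A)
  \<and> W I gm I \<bullet> W I tinv I \<bullet> W I S' A \<bullet> W I gd I = B.ue \<and> W I gm I \<bullet> W I tinv I \<bullet> W A S' I \<bullet> W I gd I = B.ue"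

lemma opantipode_wrt_iff: assumes "arr S'" "src S' = A" "tgt S' = A" "arr tinv" "src tinv = A \<otimes> A" "tgt tinv = A \<otimes> A"
  shows "opantipode_wrt S' tinv \<longleftrightarrow> zlax_hom C A s A s (mor S') \<and> inverse_of C (s A) (mor tinv) (A \<otimes> A) (A \<otimes> A)
    \<and> cmp C mu (cmp C (mor tinv) (cmp C (tarr C (mor S') (idm C A)) cm)) = cmp C un cu
    \<and> cmp C mu (cmp C (mor tinv) (cmp C (tarr C (idm C A) (mor S')) cm)) = cmp C un cu"
proof -
  have 1: "W I tinv I \<bullet> W I (gs A) I = ID (A \<otimes> A) \<longleftrightarrow> cmp C (mor tinv) (s A) = idm C (A \<otimes> A)"
  proof -
    have "W I tinv I \<bullet> W I (gs A) I = ID (A \<otimes> A) \<longleftrightarrow> tinv \<bullet> gs A = ID (A \<otimes> A)" using assms by (simp add: W_I1)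
    also have "\<dots> \<longleftrightarrow> mor (tinv \<bullet> gs A) = mor (ID (A \<otimes> A))" using assms by (intro eq_mor) auto
    finally show ?thesis using assms by (simp add: msimps)
  qed
  have 2: "W I (gs A) I \<bullet> W I tinv I = ID (A \<otimes> A) \<longleftrightarrow> cmp C (s A) (mor tinv) = idm C (A \<otimes> A)"
  proof -
    have "W I (gs A) I \<bullet> W I tinv I = ID (A \<otimes> A) \<longleftrightarrow> gs A \<bullet> tinv = ID (A \<otimes> A)" using assms by (simp add: W_I1)
    also have "\<dots> \<longleftrightarrow> mor (gs A \<bullet> tinv) = mor (ID (A \<otimes> A))" using assms by (intro eq_mor) auto
    finally show ?thesis using assms by (simp add: msimps)
  qed
  have 3: "W I gm I \<bullet> W I tinv I \<bullet> W I S' A \<bullet> W I gd I = B.ue \<longleftrightarrow> cmp C mu (cmp C (mor tinv) (cmp C (tarr C (mor S') (idm C A)) cm)) = cmp C un cu"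
  proof -
    have "W I gm I \<bullet> W I tinv I \<bullet> W I S' A \<bullet> W I gd I = B.ue \<longleftrightarrow> gm \<bullet> (tinv \<bullet> (tn S' (ID A) \<bullet> gd)) = gu \<bullet> ge"
      using assms by (simp add: W_I1 B.ue_def tn_split)
    also have "\<dots> \<longleftrightarrow> mor (gm \<bullet> (tinv \<bullet> (tn S' (ID A) \<bullet> gd))) = mor (gu \<bullet> ge)" using assms by (intro eq_mor) auto
    finally show ?thesis using assms by (simp add: msimps)
  qed
  have 4: "W I gm I \<bullet> W I tinv I \<bullet> W A S' I \<bullet> W I gd I = B.ue \<longleftrightarrow> cmp C mu (cmp C (mor tinv) (cmp C (tarr C (idm C A) (mor S')) cm)) = cmp C un cu"
  proof -
    have "W I gm I \<bullet> W I tinv I \<bullet> W A S' I \<bullet> W I gd I = B.ue \<longleftrightarrow> gm \<bullet> (tinv \<bullet> (tn (ID A) S' \<bullet> gd)) = gu \<bullet> ge"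
      using assms by (simp add: W_I1 B.ue_def tn_split)
    also have "\<dots> \<longleftrightarrow> mor (gm \<bullet> (tinv \<bullet> (tn (ID A) S' \<bullet> gd))) = mor (gu \<bullet> ge)" using assms by (intro eq_mor) auto
    finally show ?thesis using assms by (simp add: msimps)
  qed
  show ?thesis unfolding opantipode_wrt_def 1 2 3 4 zlax_hom_def inverse_of_def using assms arrD(3)[of S'] arrD(3)[of tinv]
    by (auto simp: lax_iff s_hom)
qed

lemma has_opantipode_iff: "has_opantipode C A s mu un cm cu \<longleftrightarrow> (\<exists>S' tinv. opantipode_wrt S' tinv)"
proof
  assume "has_opantipode C A s mu un cm cu"
  then obtain S0 ti0 where a: "zlax_hom C A s A s S0" "inverse_of C (s A) ti0 (A \<otimes> A) (A \<otimes> A)"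
    "cmp C mu (cmp C ti0 (cmp C (tarr C S0 (idm C A)) cm)) = cmp C un cu"
    "cmp C mu (cmp C ti0 (cmp C (tarr C (idm C A) S0) cm)) = cmp C un cu"
    unfolding has_opantipode_def is_opantipode_def by auto
  have h: "S0 \<in> Hom C A A" "ti0 \<in> Hom C (A \<otimes> A) (A \<otimes> A)" using a unfolding zlax_hom_def inverse_of_def by auto
  have "opantipode_wrt (mk A S0 A) (mk (A \<otimes> A) ti0 (A \<otimes> A))" using opantipode_wrt_iff[of "mk A S0 A" "mk (A \<otimes> A) ti0 (A \<otimes> A)"] h a
    by (simp add: mk_mor)
  thus "\<exists>S' tinv. opantipode_wrt S' tinv" by blast
next
  assume "\<exists>S' tinv. opantipode_wrt S' tinv"
  then obtain S' tinv where o: "opantipode_wrt S' tinv" by auto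
  hence t: "arr S'" "src S' = A" "tgt S' = A" "arr tinv" "src tinv = A \<otimes> A" "tgt tinv = A \<otimes> A" unfolding opantipode_wrt_def by auto
  show "has_opantipode C A s mu un cm cu" using opantipode_wrt_iff[OF t] o
    unfolding has_opantipode_def is_opantipode_def by blast
qed

text \<open>A central Hopf algebra: s invertible and an invertible antipode (invertibility of
  s A is implied by that of s).\<close>
lemma central_hopf_iff: "central_hopf_algebra C A s mu un cm cu \<longleftrightarrow> (\<forall>X\<in>Ob. iso_arr (gs X)) \<and> (\<exists>S. B.antip S \<and> iso_arr S)"
proof -
  have e: "(\<exists>S. is_antipode C A s mu un cm cu S \<and> iso C S A A) \<longleftrightarrow> (\<exists>S. B.antip S \<and> iso_arr S)"
  proof
    assume "\<exists>S. is_antipode C A s mu un cm cu S \<and> iso C S A A"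
    then obtain S0 where S0: "is_antipode C A s mu un cm cu S0" "iso C S0 A A" by auto
    hence h: "S0 \<in> Hom C A A" unfolding is_antipode_def zlax_hom_def by auto
    have "B.antip (mk A S0 A) \<and> iso_arr (mk A S0 A)" using antip_iff[of "mk A S0 A"] h S0 iso_iso_arr[of A A S0] by (simp add: mk_mor)
    thus "\<exists>S. B.antip S \<and> iso_arr S" ..
  next
    assume "\<exists>S. B.antip S \<and> iso_arr S"
    then obtain S where S: "B.antip S" "iso_arr S" by auto
    hence t: "arr S" "src S = A" "tgt S = A" by (auto simp: B.antip_def)
    have "is_antipode C A s mu un cm cu (mor S)" using antip_iff t S by simp
    moreover have "iso C (mor S) A A" using iso_iso_arr[of A A "mor S"] mk_mor_eq[OF t(1)] t S by simp
    ultimately show "\<exists>S. is_antipode C A s mu un cm cu S \<and> iso C S A A" by blast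
  qed
  show ?thesis unfolding central_hopf_algebra_def e[symmetric] invertible_hb_iff[symmetric] using LCB
    by (auto simp: invertible_hb_def)
qed

lemma bialg_invI: assumes "arr tinv" "src tinv = A \<otimes> A" "tgt tinv = A \<otimes> A" "W I tinv I \<bullet> W I (gs A) I = ID (A \<otimes> A)" "W I (gs A) I \<bullet> W I tinv I = ID (A \<otimes> A)"
  shows "bialg_inv C A gs gm gu gd ge tinv"
  by (rule bialg_inv.intro[OF B.bialg_axioms], unfold_locales) (use assms in auto)

lemma braiding_inverse:
  assumes "iso_arr (gs A)"
  obtains tinv where "arr tinv" "src tinv = A \<otimes> A" "tgt tinv = A \<otimes> A"
    "W I tinv I \<bullet> W I (gs A) I = ID (A \<otimes> A)" "W I (gs A) I \<bullet> W I tinv I = ID (A \<otimes> A)"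
proof -
  obtain tinv where "arr tinv" "src tinv = A \<otimes> A" "tgt tinv = A \<otimes> A"
    "tinv \<bullet> gs A = ID (A \<otimes> A)" "gs A \<bullet> tinv = ID (A \<otimes> A)"
    using assms unfolding iso_arr_def by (metis A_ob gs_typ(2,3) tob_ob)
  thus ?thesis using that by (simp add: W_I1)
qed

lemma antipode_of_H1_iso: "iso_arr B.H1 \<Longrightarrow> \<exists>S. B.antip S"
proof -
  assume "iso_arr B.H1"
  then obtain G where G: "arr G" "src G = A \<otimes> A" "tgt G = A \<otimes> A" "G \<bullet> B.H1 = ID (A \<otimes> A)" "B.H1 \<bullet> G = ID (A \<otimes> A)"
    unfolding iso_arr_def by auto
  from B.antipode_of_H1_inverse[OF G] show ?thesis unfolding B.antip_def by blast
qed

lemma fus_iso_of_antipode: "B.antip S \<Longrightarrow> X \<in> Ob \<Longrightarrow> iso_arr (B.fus (ID A) X)"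
proof -
  assume S: "B.antip S" and X: "X \<in> Ob"
  have a: "arr S" "src S = A" "tgt S = A" "B.conv (ID A) S = B.ue" "B.conv S (ID A) = B.ue" using S by (auto simp: B.antip_def)
  from B.fus_inverse_of_antipode[OF a X] show ?thesis unfolding iso_arr_def using a X
    by (intro conjI exI[of _ "B.fus S X"]) (auto simp: B.fus_def)
qed

lemma HrX_I: "HrX I = Hr1" by (simp add: HrX_def Hr1_def)

text \<open>Right theory.  If all HrX X = (A \<otimes> s X)(Hr1 \<otimes> X) are invertible, then so is Hr1
  (X = I), hence A \<otimes> s X and so s X itself.\<close>
lemma invertible_hb_of_right_prehopf:
  assumes HrX: "\<forall>X\<in>Ob. iso_arr (HrX X)" shows "\<forall>X\<in>Ob. iso_arr (gs X)"
proof
  fix X assume X: "X \<in> Ob"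
  have H1i: "iso_arr Hr1" using HrX HrX_I by (metis unit_ob)
  have "iso_arr (W A (gs X) I \<bullet> W I Hr1 X)" using HrX X HrX_def by simp
  moreover have "iso_arr (W I Hr1 X)" using H1i X by (intro iso_arr_W) auto
  ultimately have "iso_arr (W A (gs X) I)" using X iso_arr_cancel[of "W A (gs X) I" "W I Hr1 X"] by (auto simp: Hr1_def)
  hence "iso_arr (W I (gs X) I)" by (rule B.braiding_iso_unwhisker[OF X])
  thus "iso_arr (gs X)" using X by (simp add: W_I1)
qed

text \<open>Then Hr1 = t (fus of the co-opposite structure), so the co-opposite H1 is invertible
  and the co-opposite structure has an antipode, which is an opantipode of A.\<close>
lemma opantipode_of_right_prehopf:
  assumes HrX: "\<forall>X\<in>Ob. iso_arr (HrX X)" shows "\<exists>S' tinv. opantipode_wrt S' tinv"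
proof -
  have gi: "\<forall>X\<in>Ob. iso_arr (gs X)" using invertible_hb_of_right_prehopf[OF HrX] .
  obtain tinv where tinv: "arr tinv" "src tinv = A \<otimes> A" "tgt tinv = A \<otimes> A"
    "W I tinv I \<bullet> W I (gs A) I = ID (A \<otimes> A)" "W I (gs A) I \<bullet> W I tinv I = ID (A \<otimes> A)"
    by (rule braiding_inverse) (use gi in auto)
  interpret Inv: bialg_inv C A gs gm gu gd ge tinv by (rule bialg_invI) (use tinv in auto)
  have "iso_arr Hr1" using HrX HrX_I by (metis unit_ob)
  hence "iso_arr (W I (gs A) I \<bullet> Inv.Cop.fus (ID A) I)" using Inv.Hr1_via_cop unfolding Hr1_def by simp
  moreover have "iso_arr (W I (gs A) I)" using gi by (simp add: W_I1)
  ultimately have "iso_arr (Inv.Cop.fus (ID A) I)"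
    by (rule iso_arr_cancel2) (unfold Inv.Cop.fus_def, auto simp: Inv.cop_d_def)
  then obtain G where G: "arr G" "src G = A \<otimes> A" "tgt G = A \<otimes> A" "G \<bullet> Inv.Cop.H1 = ID (A \<otimes> A)" "Inv.Cop.H1 \<bullet> G = ID (A \<otimes> A)"
    unfolding iso_arr_def Inv.Cop.H1_fus by (auto simp: Inv.cop_d_def)
  obtain S' where S': "arr S'" "src S' = A" "tgt S' = A" "Inv.Cop.conv (ID A) S' = Inv.Cop.ue" "Inv.Cop.conv S' (ID A) = Inv.Cop.ue"
     "\<forall>X\<in>Ob. W X S' I \<bullet> W I (gs X) I = W I (gs X) I \<bullet> W I S' X" using Inv.Cop.antipode_of_H1_inverse[OF G] by blast
  have "W I gm I \<bullet> W I tinv I \<bullet> W I S' A \<bullet> W I gd I = B.ue"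
    using Inv.cop_conv_id_l[OF S'(1-3)] S'(4) Inv.cop_ue by simp
  moreover have "W I gm I \<bullet> W I tinv I \<bullet> W A S' I \<bullet> W I gd I = B.ue"
    using Inv.cop_conv_id_r[OF S'(1-3) bspec[OF S'(6) A_ob]] S'(5) Inv.cop_ue by simp
  ultimately show ?thesis unfolding opantipode_wrt_def using S' tinv by blast
qed

text \<open>Conversely, an opantipode is an antipode of the co-opposite structure, so its H1,
  hence Hr1 and all HrX X, are invertible.\<close>
lemma right_hopf_of_opantipode:
  assumes gi: "\<forall>X\<in>Ob. iso_arr (gs X)" and o: "opantipode_wrt S' tinv" shows "\<forall>X\<in>Ob. iso_arr (HrX X)"
proof
  have S': "arr S'" "src S' = A" "tgt S' = A" "\<forall>X\<in>Ob. W X S' I \<bullet> W I (gs X) I = W I (gs X) I \<bullet> W I S' X"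
    and tinv: "arr tinv" "src tinv = A \<otimes> A" "tgt tinv = A \<otimes> A" "W I tinv I \<bullet> W I (gs A) I = ID (A \<otimes> A)" "W I (gs A) I \<bullet> W I tinv I = ID (A \<otimes> A)"
    and e: "W I gm I \<bullet> W I tinv I \<bullet> W I S' A \<bullet> W I gd I = B.ue" "W I gm I \<bullet> W I tinv I \<bullet> W A S' I \<bullet> W I gd I = B.ue"
    using o unfolding opantipode_wrt_def by auto
  interpret Inv: bialg_inv C A gs gm gu gd ge tinv by (rule bialg_invI) (use tinv in auto)
  have c: "Inv.Cop.conv (ID A) S' = Inv.Cop.ue" "Inv.Cop.conv S' (ID A) = Inv.Cop.ue"
    using e Inv.cop_conv_id_l[OF S'(1-3)] Inv.cop_conv_id_r[OF S'(1-3) bspec[OF S'(4) A_ob]] Inv.cop_ue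
    by simp_all
  have "iso_arr (Inv.Cop.fus (ID A) I)" using Inv.Cop.fus_inverse_of_antipode[OF S'(1-3) c unit_ob] unfolding iso_arr_def
    by (intro conjI exI[of _ "Inv.Cop.fus S' I"]) (unfold Inv.Cop.fus_def, auto simp: Inv.cop_d_def S')
  moreover have "iso_arr (W I (gs A) I)" using gi by (simp add: W_I1)
  ultimately have "iso_arr (W I (gs A) I \<bullet> Inv.Cop.fus (ID A) I)" by (intro iso_arr_cp) (unfold Inv.Cop.fus_def, auto simp: Inv.cop_d_def)
  hence H1i: "iso_arr Hr1" using Inv.Hr1_via_cop unfolding Hr1_def by simp
  fix X assume X: "X \<in> Ob"
  have "iso_arr (W A (gs X) I)" using gi X by (intro iso_arr_W) auto
  moreover have "iso_arr (W I Hr1 X)" using H1i X by (intro iso_arr_W) auto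
  ultimately show "iso_arr (HrX X)" unfolding HrX_def using X by (intro iso_arr_cp) (auto simp: Hr1_def)
qed

lemma antipode_iso_of_opantipode:
  assumes S: "B.antip S" and o: "opantipode_wrt S' tinv" shows "iso_arr S"
proof -
  have S': "arr S'" "src S' = A" "tgt S' = A"
    and tinv: "arr tinv" "src tinv = A \<otimes> A" "tgt tinv = A \<otimes> A" "W I tinv I \<bullet> W I (gs A) I = ID (A \<otimes> A)" "W I (gs A) I \<bullet> W I tinv I = ID (A \<otimes> A)"
    and e: "W I gm I \<bullet> W I tinv I \<bullet> W I S' A \<bullet> W I gd I = B.ue"
    using o unfolding opantipode_wrt_def by auto
  interpret Inv: bialg_inv C A gs gm gu gd ge tinv by (rule bialg_invI) (use tinv in auto)
  have "S \<bullet> S' = ID A" "S' \<bullet> S = ID A" using Inv.opantipode_inverts_antipode[OF S S' e] by auto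
  thus ?thesis unfolding iso_arr_def using S S' by (intro conjI exI[of _ S']) (auto simp: B.antip_def)
qed

lemma opantipode_of_iso_antipode:
  assumes S: "B.antip S" "iso_arr S" and gi: "\<forall>X\<in>Ob. iso_arr (gs X)" shows "\<exists>S' tinv. opantipode_wrt S' tinv"
proof -
  obtain tinv where tinv: "arr tinv" "src tinv = A \<otimes> A" "tgt tinv = A \<otimes> A"
    "W I tinv I \<bullet> W I (gs A) I = ID (A \<otimes> A)" "W I (gs A) I \<bullet> W I tinv I = ID (A \<otimes> A)"
    by (rule braiding_inverse) (use gi in auto)
  interpret Inv: bialg_inv C A gs gm gu gd ge tinv by (rule bialg_invI) (use tinv in auto)
  have St: "arr S" "src S = A" "tgt S = A" using S by (auto simp: B.antip_def)
  obtain Si where Si: "arr Si" "src Si = A" "tgt Si = A" "Si \<bullet> S = ID A" "S \<bullet> Si = ID A" using S(2) St unfolding iso_arr_def by auto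
  note c = Inv.inverse_antipode_is_opantipode[OF S(1) Si(1-3) Si(5) Si(4)]
  show ?thesis unfolding opantipode_wrt_def using c Si tinv by blast
qed

lemma hopf_conditions:
  "(left_hopf C TT MT T2 \<longleftrightarrow> left_prehopf C TT MT T2)
  \<and> (left_prehopf C TT MT T2 \<longleftrightarrow> has_antipode C A s mu un cm cu)
  \<and> (right_hopf C TT MT T2 \<longleftrightarrow> right_prehopf C TT MT T2)
  \<and> (right_prehopf C TT MT T2 \<longleftrightarrow> invertible_hb C A s \<and> has_opantipode C A s mu un cm cu)
  \<and> (hopf_monad C TT MT T2 \<longleftrightarrow> prehopf_monad C TT MT T2)
  \<and> (prehopf_monad C TT MT T2 \<longleftrightarrow> central_hopf_algebra C A s mu un cm cu)"
proof -
  have left_hopf: "left_hopf C TT MT T2 \<longleftrightarrow> left_prehopf C TT MT T2"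
    unfolding left_hopf_iff left_prehopf_iff
    using antipode_of_H1_iso fus_iso_of_antipode by (metis B.H1_fus unit_ob)
  have left_prehopf: "left_prehopf C TT MT T2 \<longleftrightarrow> has_antipode C A s mu un cm cu"
    unfolding left_prehopf_iff has_antipode_iff
    using antipode_of_H1_iso fus_iso_of_antipode by (metis B.H1_fus unit_ob)
  have right_hopf: "right_hopf C TT MT T2 \<longleftrightarrow> right_prehopf C TT MT T2"
    unfolding right_hopf_iff right_prehopf_iff ..
  have right_prehopf:
    "right_prehopf C TT MT T2 \<longleftrightarrow> invertible_hb C A s \<and> has_opantipode C A s mu un cm cu"
    unfolding right_prehopf_iff invertible_hb_iff has_opantipode_iff
    using invertible_hb_of_right_prehopf opantipode_of_right_prehopf right_hopf_of_opantipode by blast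
  have hopf: "hopf_monad C TT MT T2 \<longleftrightarrow> prehopf_monad C TT MT T2"
    unfolding hopf_monad_def prehopf_monad_def using left_hopf right_hopf by blast
  have center: "prehopf_monad C TT MT T2 \<longleftrightarrow> central_hopf_algebra C A s mu un cm cu"
    unfolding prehopf_monad_def central_hopf_iff left_prehopf right_prehopf
      has_antipode_iff invertible_hb_iff has_opantipode_iff
    using antipode_iso_of_opantipode opantipode_of_iso_antipode by blast
  show ?thesis using left_hopf left_prehopf right_hopf right_prehopf hopf center by blast
qed

end

theorem mainTheorem12:
  fixes C :: "('o, 'm) smc" and A :: 'o and s :: "'o \<Rightarrow> 'm"
    and mu un cm cu :: 'm
  assumes "strict_monoidal_cat C"
    and "lax_central_bialgebra C A s mu un cm cu"
  shows
   "(left_hopf C (bm_T C A) (bm_mu C mu) (bm_T2 C A s cm)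
       \<longleftrightarrow> left_prehopf C (bm_T C A) (bm_mu C mu) (bm_T2 C A s cm))
  \<and> (left_prehopf C (bm_T C A) (bm_mu C mu) (bm_T2 C A s cm)
       \<longleftrightarrow> has_antipode C A s mu un cm cu)
  \<and> (right_hopf C (bm_T C A) (bm_mu C mu) (bm_T2 C A s cm)
       \<longleftrightarrow> right_prehopf C (bm_T C A) (bm_mu C mu) (bm_T2 C A s cm))
  \<and> (right_prehopf C (bm_T C A) (bm_mu C mu) (bm_T2 C A s cm)
       \<longleftrightarrow> invertible_hb C A s \<and> has_opantipode C A s mu un cm cu)
  \<and> (hopf_monad C (bm_T C A) (bm_mu C mu) (bm_T2 C A s cm)
       \<longleftrightarrow> prehopf_monad C (bm_T C A) (bm_mu C mu) (bm_T2 C A s cm))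
  \<and> (prehopf_monad C (bm_T C A) (bm_mu C mu) (bm_T2 C A s cm)
       \<longleftrightarrow> central_hopf_algebra C A s mu un cm cu)"
proof -
  interpret RB: lcb C A s mu un cm cu
    by (intro lcb.intro smc_calc.intro lcb_axioms.intro) (rule assms)+
  show ?thesis using RB.hopf_conditions by simp
qed

end
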